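(* Let $(\rho,u,\Theta,\beta)$ be a smooth solution of the NSME system (with $\rho>0$, $\Theta>0$, $\beta\in\mathcal S$), and let $$S=\rho\Big(\langle m^{-1}\rangle_\beta\big(\log\rho-\log Z(\beta,\Theta)-1-\tfrac n2\big)+\beta\Big).$$ Then $$\partial_tS+\nabla_x\cdot\tilde\phi=-\varepsilon\Big\{\nu|\nabla_x\chi|^2+\kappa\Big|\frac{\nabla_x\Theta}{\Theta}\Big|^2+\frac{\mu}{2\Theta}\sigma(u):\sigma(u)\Big\}\le0,$$ where $$\tilde\phi=Su+\varepsilon\Big\{-\nu\big(\log\rho-\log Z(\beta,\Theta)-1-\tfrac n2\big)\nabla_x\chi+\kappa\frac{\nabla_x\Theta}{\Theta}\Big\}.$$
   Context: Let $n\ge1$, $\varepsilon>0$, $(\gamma_m)_{m\ge1}$ in $[0,\infty)$ with $\mathcal S:=\{\beta:\sum_m\frac{me^{\beta m}}{\gamma_m}<\infty\}\ne\emptyset$; $\langle a_m\rangle_\beta:=\sum_m\frac{me^{\beta m}}{\gamma_m}a_m/\sum_m\frac{me^{\beta m}}{\gamma_m}$; $Z(\beta,\Theta)=(2\pi\Theta)^{n/2}\sum_m\frac{me^{\beta m}}{\gamma_m}$. $\mu=\rho\Theta\langle m^{-1}\rangle_\beta$, $\kappa=\frac{n+2}2\rho\Theta\langle m^{-2}\rangle_\beta$, $\nu=\rho\Theta(\langle m^{-2}\rangle_\beta-\langle m^{-1}\rangle_\beta^2)$; $\sigma(u)=\nabla_xu+(\nabla_xu)^T-\frac2n(\nabla_x\cdot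 u)\mathrm I_n$; $\chi=\log(\rho\Theta/\sum_m\frac{me^{\beta m}}{\gamma_m})$; $A:B=\sum_{ij}A_{ij}B_{ij}$. The NSME system for $(\rho,u,\Theta,\beta)(x,t)$, $x\in\mathbb{R}^n$: $\partial_t(\rho\langle m^{-1}\rangle_\beta)+\nabla_x\cdot(\rho\langle m^{-1}\rangle_\beta u)=\varepsilon\nabla_x\cdot(\nu\nabla_x\chi)$; $\partial_t\rho+\nabla_x\cdot(\rho u)=0$; $\partial_t(\rho u)+\nabla_x\cdot(\rho u\otimes u)+\nabla_x(\rho\Theta\langle m^{-1}\rangle_\beta)=\varepsilon\nabla_x\cdot(\mu\sigma(u))$; $\partial_t(\rho|u|^2+n\rho\Theta\langle m^{-1}\rangle_\beta)+\nabla_x\cdot(\rho|u|^2u+(n+2)\rho\Theta\langle m^{-1}\rangle_\beta u)=\varepsilon\nabla_x\cdot((n+2)\nu\Theta\nabla_x\chi+2\kappa\nabla_x\Theta+2\mu\sigma(u)u)$. *)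

theory Defs
  imports "HOL-Analysis.Analysis"
begin

text \<open>Weights  m e^(beta m) / gamma_m ; the factor real m makes the m = 0 term vanish,
  so sums over all naturals are sums over m >= 1.\<close>

definition wt :: "(nat \<Rightarrow> real) \<Rightarrow> real \<Rightarrow> nat \<Rightarrow> real" where
  "wt \<gamma> b m = real m * exp (b * real m) / \<gamma> m"

text \<open>The set S: the series converges (a term with gamma_m = 0, m >= 1, is +infinity).\<close>
definition Sset :: "(nat \<Rightarrow> real) \<Rightarrow> real set" where
  "Sset \<gamma> = {b. (\<forall>m\<ge>1. \<gamma> m > 0) \<and> summable (wt \<gamma> b)}"

definition Zsum :: "(nat \<Rightarrow> real) \<Rightarrow> real \<Rightarrow> real" where
  "Zsum \<gamma> b = (\<Sum>m. wt \<gamma> b m)"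

definition avg :: "(nat \<Rightarrow> real) \<Rightarrow> real \<Rightarrow> (nat \<Rightarrow> real) \<Rightarrow> real" where
  "avg \<gamma> b a = (\<Sum>m. wt \<gamma> b m * a m) / Zsum \<gamma> b"

definition Zpart :: "nat \<Rightarrow> (nat \<Rightarrow> real) \<Rightarrow> real \<Rightarrow> real \<Rightarrow> real" where
  "Zpart n \<gamma> b \<Theta> = (2 * pi * \<Theta>) powr (real n / 2) * Zsum \<gamma> b"

definition mucoef :: "(nat \<Rightarrow> real) \<Rightarrow> real \<Rightarrow> real \<Rightarrow> real \<Rightarrow> real" where
  "mucoef \<gamma> \<rho> \<Theta> b = \<rho> * \<Theta> * avg \<gamma> b (\<lambda>m. 1 / real m)"

definition kappacoef :: "nat \<Rightarrow> (nat \<Rightarrow> real) \<Rightarrow> real \<Rightarrow> real \<Rightarrow> real \<Rightarrow> real" where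
  "kappacoef n \<gamma> \<rho> \<Theta> b = (real n + 2) / 2 * \<rho> * \<Theta> * avg \<gamma> b (\<lambda>m. 1 / real m ^ 2)"

definition nucoef :: "(nat \<Rightarrow> real) \<Rightarrow> real \<Rightarrow> real \<Rightarrow> real \<Rightarrow> real" where
  "nucoef \<gamma> \<rho> \<Theta> b = \<rho> * \<Theta> *
     (avg \<gamma> b (\<lambda>m. 1 / real m ^ 2) - (avg \<gamma> b (\<lambda>m. 1 / real m)) ^ 2)"

definition chifun :: "(nat \<Rightarrow> real) \<Rightarrow> real \<Rightarrow> real \<Rightarrow> real \<Rightarrow> real" where
  "chifun \<gamma> \<rho> \<Theta> b = ln (\<rho> * \<Theta> / Zsum \<gamma> b)"

definition pt :: "((real ^ 'n) \<times> real \<Rightarrow> 'b::real_normed_vector) \<Rightarrow> (real ^ 'n) \<times> real \<Rightarrow> 'b" where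
  "pt f z = vector_derivative (\<lambda>s. f (fst z, s)) (at (snd z))"

definition px :: "'n::finite \<Rightarrow> ((real ^ 'n) \<times> real \<Rightarrow> 'b::real_normed_vector) \<Rightarrow> (real ^ 'n) \<times> real \<Rightarrow> 'b" where
  "px i f z = vector_derivative (\<lambda>h. f (fst z + h *\<^sub>R axis i 1, snd z)) (at 0)"

definition grad :: "((real ^ 'n::finite) \<times> real \<Rightarrow> real) \<Rightarrow> (real ^ 'n) \<times> real \<Rightarrow> real ^ 'n" where
  "grad f z = (\<chi> i. px i f z)"

definition divg :: "((real ^ 'n::finite) \<times> real \<Rightarrow> real ^ 'n) \<Rightarrow> (real ^ 'n) \<times> real \<Rightarrow> real" where
  "divg F z = (\<Sum>i\<in>UNIV. px i (\<lambda>w. F w $ i) z)"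

definition divM :: "((real ^ 'n::finite) \<times> real \<Rightarrow> real ^ 'n ^ 'n) \<Rightarrow> (real ^ 'n) \<times> real \<Rightarrow> real ^ 'n" where
  "divM A z = (\<chi> i. \<Sum>j\<in>UNIV. px j (\<lambda>w. A w $ i $ j) z)"

definition sigmaM :: "((real ^ 'n::finite) \<times> real \<Rightarrow> real ^ 'n) \<Rightarrow> (real ^ 'n) \<times> real \<Rightarrow> real ^ 'n ^ 'n" where
  "sigmaM u z = (\<chi> i j. px j (\<lambda>w. u w $ i) z + px i (\<lambda>w. u w $ j) z
      - 2 / real CARD('n) * divg u z * (if i = j then 1 else 0))"

definition tensor :: "real ^ 'n::finite \<Rightarrow> real ^ 'n \<Rightarrow> real ^ 'n ^ 'n" where
  "tensor a b = (\<chi> i j. a $ i * b $ j)"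

definition ddot :: "real ^ 'n::finite ^ 'n \<Rightarrow> real ^ 'n ^ 'n \<Rightarrow> real" where
  "ddot A B = (\<Sum>i\<in>UNIV. \<Sum>j\<in>UNIV. A $ i $ j * B $ i $ j)"

fun dd :: "'a::real_normed_vector list \<Rightarrow> ('a \<Rightarrow> 'b::real_normed_vector) \<Rightarrow> 'a \<Rightarrow> 'b" where
  "dd [] f = f"
| "dd (v # vs) f = (\<lambda>z. vector_derivative (\<lambda>h. dd vs f (z + h *\<^sub>R v)) (at 0))"

definition smooth_on :: "'a::real_normed_vector set \<Rightarrow> ('a \<Rightarrow> 'b::real_normed_vector) \<Rightarrow> bool" where
  "smooth_on \<Omega> f \<longleftrightarrow> (\<forall>vs. continuous_on \<Omega> (dd vs f) \<and>
       (\<forall>v. \<forall>z\<in>\<Omega>. (\<lambda>h. dd vs f (z + h *\<^sub>R v)) differentiable (at 0)))"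

definition Lfun :: "nat \<Rightarrow> (nat \<Rightarrow> real) \<Rightarrow> real \<Rightarrow> real \<Rightarrow> real \<Rightarrow> real" where
  "Lfun n \<gamma> \<rho> \<Theta> b = ln \<rho> - ln (Zpart n \<gamma> b \<Theta>) - 1 - real n / 2"

definition Sfun :: "nat \<Rightarrow> (nat \<Rightarrow> real) \<Rightarrow> real \<Rightarrow> real \<Rightarrow> real \<Rightarrow> real" where
  "Sfun n \<gamma> \<rho> \<Theta> b = \<rho> * (avg \<gamma> b (\<lambda>m. 1 / real m) * Lfun n \<gamma> \<rho> \<Theta> b + b)"

definition phifield :: "real \<Rightarrow> (nat \<Rightarrow> real) \<Rightarrow> ((real ^ 'n::finite) \<times> real \<Rightarrow> real)
   \<Rightarrow> ((real ^ 'n) \<times> real \<Rightarrow> real ^ 'n) \<Rightarrow> ((real ^ 'n) \<times> real \<Rightarrow> real)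
   \<Rightarrow> ((real ^ 'n) \<times> real \<Rightarrow> real) \<Rightarrow> (real ^ 'n) \<times> real \<Rightarrow> real ^ 'n" where
  "phifield \<epsilon> \<gamma> \<rho> u \<Theta> \<beta> z =
     (let n = CARD('n);
          L = Lfun n \<gamma> (\<rho> z) (\<Theta> z) (\<beta> z)
      in Sfun n \<gamma> (\<rho> z) (\<Theta> z) (\<beta> z) *\<^sub>R u z
         + \<epsilon> *\<^sub>R ( - (nucoef \<gamma> (\<rho> z) (\<Theta> z) (\<beta> z) * L)
                        *\<^sub>R grad (\<lambda>w. chifun \<gamma> (\<rho> w) (\<Theta> w) (\<beta> w)) z
                  + kappacoef n \<gamma> (\<rho> z) (\<Theta> z) (\<beta> z) *\<^sub>R ((1 / \<Theta> z) *\<^sub>R grad \<Theta> z)))"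

definition NSME :: "real \<Rightarrow> (nat \<Rightarrow> real) \<Rightarrow> ((real ^ 'n::finite) \<times> real) set
   \<Rightarrow> ((real ^ 'n) \<times> real \<Rightarrow> real) \<Rightarrow> ((real ^ 'n) \<times> real \<Rightarrow> real ^ 'n)
   \<Rightarrow> ((real ^ 'n) \<times> real \<Rightarrow> real) \<Rightarrow> ((real ^ 'n) \<times> real \<Rightarrow> real) \<Rightarrow> bool" where
  "NSME \<epsilon> \<gamma> \<Omega> \<rho> u \<Theta> \<beta> \<longleftrightarrow>
    (let n = CARD('n);
         a1 = (\<lambda>z. avg \<gamma> (\<beta> z) (\<lambda>m. 1 / real m));
         \<mu> = (\<lambda>z. mucoef \<gamma> (\<rho> z) (\<Theta> z) (\<beta> z));
         \<kappa> = (\<lambda>z. kappacoef n \<gamma> (\<rho> z) (\<Theta> z) (\<beta> z));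
         \<nu> = (\<lambda>z. nucoef \<gamma> (\<rho> z) (\<Theta> z) (\<beta> z));
         \<chi>f = (\<lambda>z. chifun \<gamma> (\<rho> z) (\<Theta> z) (\<beta> z))
     in \<forall>z\<in>\<Omega>.
       pt (\<lambda>w. \<rho> w * a1 w) z + divg (\<lambda>w. (\<rho> w * a1 w) *\<^sub>R u w) z
         = \<epsilon> * divg (\<lambda>w. \<nu> w *\<^sub>R grad \<chi>f w) z
     \<and> pt \<rho> z + divg (\<lambda>w. \<rho> w *\<^sub>R u w) z = 0
     \<and> pt (\<lambda>w. \<rho> w *\<^sub>R u w) z + divM (\<lambda>w. \<rho> w *\<^sub>R tensor (u w) (u w)) z
         + grad (\<lambda>w. \<rho> w * \<Theta> w * a1 w) z
         = \<epsilon> *\<^sub>R divM (\<lambda>w. \<mu> w *\<^sub>R sigmaM u w) z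
     \<and> pt (\<lambda>w. \<rho> w * (norm (u w))\<^sup>2 + real n * \<rho> w * \<Theta> w * a1 w) z
       + divg (\<lambda>w. (\<rho> w * (norm (u w))\<^sup>2) *\<^sub>R u w
                   + ((real n + 2) * \<rho> w * \<Theta> w * a1 w) *\<^sub>R u w) z
         = \<epsilon> * divg (\<lambda>w. ((real n + 2) * \<nu> w * \<Theta> w) *\<^sub>R grad \<chi>f w
                   + (2 * \<kappa> w) *\<^sub>R grad \<Theta> w + (2 * \<mu> w) *\<^sub>R (sigmaM u w *v u w)) z)"

end

(*
  Write N = rho <1/m>_beta for the number density, p = N Theta for the pressure and
  D = d/dt + u . grad for the material derivative.  Since d/dbeta <m^k>_beta = <m^(k+1)> - <m^k> <m>
  and d/dbeta log Z = <m>, the entropy density S = N L + rho beta obeys the Gibbs relation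
  dS = (L + 1) dN + beta d(rho) - (n/2) (N/Theta) d(Theta).  Together with the mass and number
  balances this gives
    dS/dt + div (S u) = (L + 1) eps div (nu grad chi) - N div u - (n/2) (N/Theta) D Theta.
  The energy equation minus the kinetic energy balance (the momentum equation dotted with u), with
  sigma : grad u = sigma : sigma / 2 for the symmetric traceless sigma, is the temperature equation
    n N D Theta + 2 p div u
      = eps (2 Theta div (nu grad chi) + (n + 2) nu grad Theta . grad chi + 2 div (kappa grad Theta)
             + mu sigma : sigma).
  Inserting it and grad L = grad chi - (n + 2)/(2 Theta) grad Theta, everything except the three
  dissipative squares cancels against the divergence of the diffusive part of the entropy flux.
*)

theory Submission
  imports Defs
begin

section \<open>Directional derivatives\<close>

definition dir_deriv :: "'a::real_normed_vector \<Rightarrow> ('a \<Rightarrow> 'b::real_normed_vector) \<Rightarrow> 'a \<Rightarrow> 'b" where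
  "dir_deriv v f z = vector_derivative (\<lambda>h. f (z + h *\<^sub>R v)) (at 0)"

definition has_dir_deriv :: "'a::real_normed_vector \<Rightarrow> ('a \<Rightarrow> 'b::real_normed_vector) \<Rightarrow> 'a \<Rightarrow> 'b \<Rightarrow> bool" where
  "has_dir_deriv v f z d \<longleftrightarrow> ((\<lambda>h. f (z + h *\<^sub>R v)) has_vector_derivative d) (at 0)"

definition dir_differentiable_at :: "('a::real_normed_vector \<Rightarrow> 'b::real_normed_vector) \<Rightarrow> 'a \<Rightarrow> bool" where
  "dir_differentiable_at f z \<longleftrightarrow> (\<forall>v. \<exists>d. has_dir_deriv v f z d)"

lemma dir_deriv_eqI: "has_dir_deriv v f z d \<Longrightarrow> dir_deriv v f z = d"
  unfolding has_dir_deriv_def dir_deriv_def by (rule vector_derivative_at)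

lemma has_dir_deriv_dir_deriv: "dir_differentiable_at f z \<Longrightarrow> has_dir_deriv v f z (dir_deriv v f z)"
  unfolding dir_differentiable_at_def using dir_deriv_eqI by metis

lemma dir_differentiable_atI: "(\<And>v. has_dir_deriv v f z (d v)) \<Longrightarrow> dir_differentiable_at f z"
  unfolding dir_differentiable_at_def by blast

lemma has_dir_deriv_real_iff:
  "has_dir_deriv v f z d \<longleftrightarrow> ((\<lambda>h. f (z + h *\<^sub>R v)) has_real_derivative d) (at 0)"
  unfolding has_dir_deriv_def has_real_derivative_iff_has_vector_derivative ..

lemma eventually_line_in_open:
  fixes z v :: "'a::real_normed_vector"
  assumes "open \<Omega>" "z \<in> \<Omega>"
  shows "eventually (\<lambda>h::real. z + h *\<^sub>R v \<in> \<Omega>) (nhds 0)"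
proof -
  have "((\<lambda>h::real. z + h *\<^sub>R v) \<longlongrightarrow> z + 0 *\<^sub>R v) (nhds 0)"
    by (intro tendsto_intros filterlim_ident)
  then have "filterlim (\<lambda>h::real. z + h *\<^sub>R v) (nhds z) (nhds 0)"
    by simp
  moreover have "eventually (\<lambda>w. w \<in> \<Omega>) (nhds z)"
    using assms eventually_nhds_in_open by blast
  ultimately show ?thesis
    using eventually_compose_filterlim by blast
qed

lemma has_dir_deriv_cong:
  assumes "open \<Omega>" "z \<in> \<Omega>" "\<And>w. w \<in> \<Omega> \<Longrightarrow> f w = g w" "has_dir_deriv v g z d"
  shows "has_dir_deriv v f z d"
proof -
  have "eventually (\<lambda>h. h \<in> UNIV \<longrightarrow> f (z + h *\<^sub>R v) = g (z + h *\<^sub>R v)) (nhds 0)"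
    using eventually_line_in_open[OF assms(1,2)] by eventually_elim (use assms(3) in auto)
  then show ?thesis
    using assms(2,3,4) unfolding has_dir_deriv_def by (subst has_vector_derivative_cong_ev) auto
qed

lemma dir_differentiable_at_cong:
  "open \<Omega> \<Longrightarrow> z \<in> \<Omega> \<Longrightarrow> (\<And>w. w \<in> \<Omega> \<Longrightarrow> f w = g w) \<Longrightarrow> dir_differentiable_at g z
    \<Longrightarrow> dir_differentiable_at f z"
  unfolding dir_differentiable_at_def using has_dir_deriv_cong by metis

named_theorems has_dir_deriv_intros

lemma has_dir_deriv_const [has_dir_deriv_intros]: "has_dir_deriv v (\<lambda>w. c) z 0"
  unfolding has_dir_deriv_def by (rule has_vector_derivative_const)

lemma has_dir_deriv_add [has_dir_deriv_intros]:
  "has_dir_deriv v f z a \<Longrightarrow> has_dir_deriv v g z b \<Longrightarrow> has_dir_deriv v (\<lambda>w. f w + g w) z (a + b)"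
  unfolding has_dir_deriv_def by (rule has_vector_derivative_add)

lemma has_dir_deriv_diff [has_dir_deriv_intros]:
  "has_dir_deriv v f z a \<Longrightarrow> has_dir_deriv v g z b \<Longrightarrow> has_dir_deriv v (\<lambda>w. f w - g w) z (a - b)"
  unfolding has_dir_deriv_def by (rule has_vector_derivative_diff)

lemma has_dir_deriv_scaleR [has_dir_deriv_intros]:
  "has_dir_deriv v f z a \<Longrightarrow> has_dir_deriv v F z b \<Longrightarrow>
    has_dir_deriv v (\<lambda>w. f w *\<^sub>R F w) z (f z *\<^sub>R b + a *\<^sub>R F z)"
  unfolding has_dir_deriv_def
  using has_vector_derivative_scaleR[of "\<lambda>h. f (z + h *\<^sub>R v)" a 0 UNIV "\<lambda>h. F (z + h *\<^sub>R v)" b]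
  by (simp add: has_real_derivative_iff_has_vector_derivative)

lemma has_dir_deriv_mult [has_dir_deriv_intros]:
  "has_dir_deriv v f z a \<Longrightarrow> has_dir_deriv v g z b \<Longrightarrow>
    has_dir_deriv v (\<lambda>w. f w * g w :: real) z (f z * b + a * g z)"
  using has_dir_deriv_scaleR[of v f z a g b] by simp

lemma has_dir_deriv_inner [has_dir_deriv_intros]:
  "has_dir_deriv v F z a \<Longrightarrow> has_dir_deriv v G z b \<Longrightarrow>
    has_dir_deriv v (\<lambda>w. F w \<bullet> G w) z (F z \<bullet> b + a \<bullet> G z)"
  unfolding has_dir_deriv_def
  using bounded_bilinear.has_vector_derivative[OF bounded_bilinear_inner,
      of "\<lambda>h. F (z + h *\<^sub>R v)" a 0 UNIV "\<lambda>h. G (z + h *\<^sub>R v)" b]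
  by simp

lemma has_dir_deriv_chain:
  assumes "(g has_real_derivative g') (at (f z))" "has_dir_deriv v f z d"
  shows "has_dir_deriv v (\<lambda>w. g (f w)) z (g' * d)"
proof -
  have "(g has_real_derivative g') (at (f (z + 0 *\<^sub>R v)))"
    using assms(1) by simp
  from DERIV_chain2[OF this assms(2)[unfolded has_dir_deriv_real_iff]] show ?thesis
    unfolding has_dir_deriv_real_iff .
qed

lemma has_dir_deriv_divide [has_dir_deriv_intros]:
  "has_dir_deriv v f z (a::real) \<Longrightarrow> has_dir_deriv v g z b \<Longrightarrow> g z \<noteq> 0 \<Longrightarrow>
    has_dir_deriv v (\<lambda>w. f w / g w) z ((a * g z - f z * b) / (g z * g z))"
  unfolding has_dir_deriv_real_iff by (auto intro!: derivative_eq_intros simp: field_simps power2_eq_square)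

lemma has_dir_deriv_ln [has_dir_deriv_intros]:
  fixes f :: "'a::real_normed_vector \<Rightarrow> real"
  assumes "has_dir_deriv v f z a" "f z > 0"
  shows "has_dir_deriv v (\<lambda>w. ln (f w)) z (a / f z)"
proof -
  have "(ln has_real_derivative 1 / f z) (at (f z))"
    using assms(2) by (auto intro!: derivative_eq_intros)
  from has_dir_deriv_chain[OF this assms(1)] show ?thesis
    by simp
qed

lemma has_dir_deriv_sum [has_dir_deriv_intros]:
  "(\<And>i. has_dir_deriv v (f i) z (d i)) \<Longrightarrow>
    has_dir_deriv v (\<lambda>w. \<Sum>i\<in>I. f i w) z (\<Sum>i\<in>I. d i)"
  unfolding has_dir_deriv_def by (rule has_vector_derivative_sum)

lemma has_dir_deriv_component [has_dir_deriv_intros]: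
  "has_dir_deriv v F z D \<Longrightarrow> has_dir_deriv v (\<lambda>w. F w $ i) z (D $ i)"
  unfolding has_dir_deriv_def by (rule bounded_linear.has_vector_derivative[OF bounded_linear_vec_nth])

lemma bounded_linear_axis: "bounded_linear (axis i :: 'a::real_normed_vector \<Rightarrow> 'a ^ 'n::finite)"
proof (rule bounded_linear_intro[where K = 1])
  show "norm (axis i x) \<le> norm x * 1" for x :: 'a
    by (simp add: norm_vec_def axis_def L2_set_def if_distrib[of "\<lambda>y. (norm y)\<^sup>2"] sum.If_cases)
qed (simp_all add: axis_def vec_eq_iff)

lemma vec_lambda_eq_sum_axis: "(\<chi> i. f i) = (\<Sum>i\<in>UNIV. axis i (f i) :: 'a::real_normed_vector ^ 'n::finite)"
  by (simp add: vec_eq_iff sum_component axis_def)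

lemma has_dir_deriv_vec_lambda [has_dir_deriv_intros]:
  "(\<And>i. has_dir_deriv v (f i) z (d i)) \<Longrightarrow>
    has_dir_deriv v (\<lambda>w. \<chi> i. f i w) z (\<chi> i. d i)"
  unfolding has_dir_deriv_def vec_lambda_eq_sum_axis
  by (intro has_vector_derivative_sum bounded_linear.has_vector_derivative[OF bounded_linear_axis])

lemma has_dir_deriv_eq_rhs: "has_dir_deriv v f z d \<Longrightarrow> d = d' \<Longrightarrow> has_dir_deriv v f z d'"
  by simp

named_theorems dir_differentiable_intros

lemma dir_differentiable_const [dir_differentiable_intros]: "dir_differentiable_at (\<lambda>w. c) z"
  by (rule dir_differentiable_atI, rule has_dir_deriv_const)

lemma dir_differentiable_add [dir_differentiable_intros]:
  "dir_differentiable_at f z \<Longrightarrow> dir_differentiable_at g z \<Longrightarrow> dir_differentiable_at (\<lambda>w. f w + g w) z"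
  by (rule dir_differentiable_atI, rule has_dir_deriv_add; (rule has_dir_deriv_dir_deriv)?; assumption)

lemma dir_differentiable_diff [dir_differentiable_intros]:
  "dir_differentiable_at f z \<Longrightarrow> dir_differentiable_at g z \<Longrightarrow> dir_differentiable_at (\<lambda>w. f w - g w) z"
  by (rule dir_differentiable_atI, rule has_dir_deriv_diff; (rule has_dir_deriv_dir_deriv)?; assumption)

lemma dir_differentiable_scaleR [dir_differentiable_intros]:
  "dir_differentiable_at f z \<Longrightarrow> dir_differentiable_at F z \<Longrightarrow> dir_differentiable_at (\<lambda>w. f w *\<^sub>R F w) z"
  by (rule dir_differentiable_atI, rule has_dir_deriv_scaleR; (rule has_dir_deriv_dir_deriv)?; assumption)

lemma dir_differentiable_mult [dir_differentiable_intros]: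
  "dir_differentiable_at f z \<Longrightarrow> dir_differentiable_at g z \<Longrightarrow> dir_differentiable_at (\<lambda>w. f w * g w :: real) z"
  by (rule dir_differentiable_atI, rule has_dir_deriv_mult; (rule has_dir_deriv_dir_deriv)?; assumption)

lemma dir_differentiable_inner [dir_differentiable_intros]:
  "dir_differentiable_at F z \<Longrightarrow> dir_differentiable_at G z \<Longrightarrow> dir_differentiable_at (\<lambda>w. F w \<bullet> G w) z"
  by (rule dir_differentiable_atI, rule has_dir_deriv_inner; (rule has_dir_deriv_dir_deriv)?; assumption)

lemma dir_differentiable_divide [dir_differentiable_intros]:
  "dir_differentiable_at f z \<Longrightarrow> dir_differentiable_at g z \<Longrightarrow> g z \<noteq> 0 \<Longrightarrow>
    dir_differentiable_at (\<lambda>w. f w / g w :: real) z"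
  by (rule dir_differentiable_atI, rule has_dir_deriv_divide; (rule has_dir_deriv_dir_deriv)?; assumption)

lemma dir_differentiable_sum [dir_differentiable_intros]:
  assumes "\<And>i. dir_differentiable_at (f i) z"
  shows "dir_differentiable_at (\<lambda>w. \<Sum>i\<in>I. f i w) z"
  by (rule dir_differentiable_atI, rule has_dir_deriv_sum, rule has_dir_deriv_dir_deriv, rule assms)

lemma dir_differentiable_component [dir_differentiable_intros]:
  "dir_differentiable_at F z \<Longrightarrow> dir_differentiable_at (\<lambda>w. F w $ i) z"
  by (rule dir_differentiable_atI, rule has_dir_deriv_component, rule has_dir_deriv_dir_deriv)

lemma dir_differentiable_vec_lambda [dir_differentiable_intros]:
  assumes "\<And>i. dir_differentiable_at (f i) z"
  shows "dir_differentiable_at (\<lambda>w. \<chi> i. f i w) z"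
  by (rule dir_differentiable_atI, rule has_dir_deriv_vec_lambda, rule has_dir_deriv_dir_deriv, rule assms)

lemma dir_deriv_add:
  "dir_differentiable_at f z \<Longrightarrow> dir_differentiable_at g z \<Longrightarrow>
    dir_deriv v (\<lambda>w. f w + g w) z = dir_deriv v f z + dir_deriv v g z"
  by (intro dir_deriv_eqI has_dir_deriv_intros has_dir_deriv_dir_deriv)

lemma dir_deriv_diff:
  "dir_differentiable_at f z \<Longrightarrow> dir_differentiable_at g z \<Longrightarrow>
    dir_deriv v (\<lambda>w. f w - g w) z = dir_deriv v f z - dir_deriv v g z"
  by (intro dir_deriv_eqI has_dir_deriv_intros has_dir_deriv_dir_deriv)

lemma dir_deriv_scaleR:
  "dir_differentiable_at f z \<Longrightarrow> dir_differentiable_at F z \<Longrightarrow>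
    dir_deriv v (\<lambda>w. f w *\<^sub>R F w) z = f z *\<^sub>R dir_deriv v F z + dir_deriv v f z *\<^sub>R F z"
  by (intro dir_deriv_eqI has_dir_deriv_intros has_dir_deriv_dir_deriv)

lemma dir_deriv_mult:
  "dir_differentiable_at f z \<Longrightarrow> dir_differentiable_at g z \<Longrightarrow>
    dir_deriv v (\<lambda>w. f w * g w :: real) z = f z * dir_deriv v g z + dir_deriv v f z * g z"
  by (intro dir_deriv_eqI has_dir_deriv_intros has_dir_deriv_dir_deriv)

lemma dir_deriv_inner:
  "dir_differentiable_at F z \<Longrightarrow> dir_differentiable_at G z \<Longrightarrow>
    dir_deriv v (\<lambda>w. F w \<bullet> G w) z = F z \<bullet> dir_deriv v G z + dir_deriv v F z \<bullet> G z"
  by (intro dir_deriv_eqI has_dir_deriv_intros has_dir_deriv_dir_deriv)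

lemma dir_deriv_sum:
  "(\<And>i. dir_differentiable_at (f i) z) \<Longrightarrow> dir_deriv v (\<lambda>w. \<Sum>i\<in>I. f i w) z = (\<Sum>i\<in>I. dir_deriv v (f i) z)"
  by (intro dir_deriv_eqI has_dir_deriv_intros has_dir_deriv_dir_deriv)

lemma dir_deriv_component:
  "dir_differentiable_at F z \<Longrightarrow> dir_deriv v (\<lambda>w. F w $ i) z = dir_deriv v F z $ i"
  by (intro dir_deriv_eqI has_dir_deriv_intros has_dir_deriv_dir_deriv)

lemma dir_deriv_const: "dir_deriv v (\<lambda>w. c) z = 0"
  by (intro dir_deriv_eqI has_dir_deriv_intros)

lemma dd_Cons_Nil: "dd [v] f = dir_deriv v f"
  by (simp add: fun_eq_iff dir_deriv_def)

lemma smooth_on_dd_dir_differentiable: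
  "smooth_on \<Omega> f \<Longrightarrow> z \<in> \<Omega> \<Longrightarrow> dir_differentiable_at (dd vs f) z"
  unfolding smooth_on_def dir_differentiable_at_def has_dir_deriv_def
  by (metis vector_derivative_works)

lemma smooth_on_dir_differentiable:
  "smooth_on \<Omega> f \<Longrightarrow> z \<in> \<Omega> \<Longrightarrow> dir_differentiable_at f z"
  using smooth_on_dd_dir_differentiable[of \<Omega> f z "[]"] by simp

lemma smooth_on_dir_deriv_dir_differentiable:
  "smooth_on \<Omega> f \<Longrightarrow> z \<in> \<Omega> \<Longrightarrow> dir_differentiable_at (dir_deriv v f) z"
  using smooth_on_dd_dir_differentiable[of \<Omega> f z "[v]"] unfolding dd_Cons_Nil .

section \<open>Calculus on space-time\<close>

lemma has_vector_derivative_at_shift_iff: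
  fixes g :: "real \<Rightarrow> 'b::real_normed_vector"
  shows "(g has_vector_derivative D) (at c) \<longleftrightarrow> ((\<lambda>h. g (c + h)) has_vector_derivative D) (at 0)"
proof
  assume "(g has_vector_derivative D) (at c)"
  moreover have "((\<lambda>h. c + h) has_vector_derivative 1) (at (0::real))"
    by (auto intro!: derivative_eq_intros)
  ultimately show "((\<lambda>h. g (c + h)) has_vector_derivative D) (at 0)"
    using vector_diff_chain_at[of "\<lambda>h. c + h" 1 0 g D] by (simp add: o_def)
next
  assume "((\<lambda>h. g (c + h)) has_vector_derivative D) (at 0)"
  moreover have "((\<lambda>s. s - c) has_vector_derivative 1) (at c)"
    by (auto intro!: derivative_eq_intros)
  ultimately show "(g has_vector_derivative D) (at c)"
    using vector_diff_chain_at[of "\<lambda>s. s - c" 1 c "\<lambda>h. g (c + h)" D] by (simp add: o_def)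
qed

lemma pt_eq_dir_deriv: "pt f = dir_deriv (0, 1) f"
proof (rule ext)
  fix z
  have "pt f z = vector_derivative (\<lambda>h. f (fst z, snd z + h)) (at 0)"
    unfolding pt_def vector_derivative_def using has_vector_derivative_at_shift_iff[of "\<lambda>s. f (fst z, s)"]
    by simp
  then show "pt f z = dir_deriv (0, 1) f z"
    unfolding dir_deriv_def by (cases z) (simp add: scaleR_prod_def add.commute)
qed

lemma px_eq_dir_deriv: "px i f = dir_deriv (axis i 1, 0) f"
proof (rule ext)
  fix z
  show "px i f z = dir_deriv (axis i 1, 0) f z"
    unfolding px_def dir_deriv_def by (cases z) (simp add: scaleR_prod_def)
qed

lemma grad_eq_dir_deriv: "grad f z = (\<chi> i. dir_deriv (axis i 1, 0) f z)"
  by (simp add: grad_def px_eq_dir_deriv)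

definition jac :: "((real ^ 'n::finite) \<times> real \<Rightarrow> real ^ 'm::finite) \<Rightarrow> (real ^ 'n) \<times> real \<Rightarrow> real ^ 'n ^ 'm" where
  "jac F z = (\<chi> i j. px j (\<lambda>w. F w $ i) z)"

lemma divg_eq_trace_jac: "divg u z = trace (jac u z)"
  by (simp add: divg_def trace_def jac_def)

lemma divg_add:
  assumes "dir_differentiable_at F z" "dir_differentiable_at G z"
  shows "divg (\<lambda>w. F w + G w) z = divg F z + divg G z"
  using assms
  by (simp add: divg_def px_eq_dir_deriv dir_deriv_add dir_differentiable_component sum.distrib)

lemma divg_diff:
  assumes "dir_differentiable_at F z" "dir_differentiable_at G z"
  shows "divg (\<lambda>w. F w - G w) z = divg F z - divg G z"
  using assms
  by (simp add: divg_def px_eq_dir_deriv dir_deriv_diff dir_differentiable_component sum_subtractf)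

lemma divg_scaleR:
  assumes "dir_differentiable_at f z" "dir_differentiable_at F z"
  shows "divg (\<lambda>w. f w *\<^sub>R F w) z = f z * divg F z + grad f z \<bullet> F z"
  using assms
  by (simp add: divg_def grad_def px_eq_dir_deriv dir_deriv_mult dir_differentiable_component
      sum.distrib sum_distrib_left inner_vec_def)

lemma divg_const_scaleR:
  assumes "dir_differentiable_at F z"
  shows "divg (\<lambda>w. c *\<^sub>R F w) z = c * divg F z"
  using divg_scaleR[OF dir_differentiable_const assms, of c]
  by (simp add: grad_def px_eq_dir_deriv dir_deriv_const inner_vec_def)

lemma grad_mult:
  assumes "dir_differentiable_at f z" "dir_differentiable_at g z"
  shows "grad (\<lambda>w. f w * g w) z = f z *\<^sub>R grad g z + g z *\<^sub>R grad f z"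
  using assms by (simp add: vec_eq_iff grad_def px_eq_dir_deriv dir_deriv_mult)

lemma grad_inner_self:
  assumes "dir_differentiable_at F z"
  shows "grad (\<lambda>w. F w \<bullet> F w) z = 2 *\<^sub>R (F z v* jac F z)"
proof -
  have "px i (\<lambda>w. F w \<bullet> F w) z = 2 * (\<Sum>k\<in>UNIV. F z $ k * px i (\<lambda>w. F w $ k) z)" for i
  proof -
    have "px i (\<lambda>w. F w \<bullet> F w) z = 2 * (F z \<bullet> px i F z)"
      using assms by (simp add: px_eq_dir_deriv dir_deriv_inner inner_commute)
    also have "F z \<bullet> px i F z = (\<Sum>k\<in>UNIV. F z $ k * px i (\<lambda>w. F w $ k) z)"
      using assms by (simp add: inner_vec_def px_eq_dir_deriv dir_deriv_component)
    finally show ?thesis .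
  qed
  then show ?thesis
    by (simp add: vec_eq_iff grad_def jac_def vector_matrix_mult_def)
qed

lemma divM_scaleR_tensor:
  assumes f: "dir_differentiable_at f z" and F: "dir_differentiable_at F z"
  shows "divM (\<lambda>w. f w *\<^sub>R tensor (F w) (F w)) z
    = divg (\<lambda>w. f w *\<^sub>R F w) z *\<^sub>R F z + f z *\<^sub>R (jac F z *v F z)"
proof -
  have entry: "px j (\<lambda>w. f w * (F w $ i * F w $ j)) z
      = F z $ i * px j (\<lambda>w. f w * F w $ j) z + f z * (px j (\<lambda>w. F w $ i) z * F z $ j)" for i j
    using f F by (simp add: px_eq_dir_deriv dir_deriv_mult dir_differentiable_intros algebra_simps)
  show ?thesis
    by (simp add: vec_eq_iff divM_def divg_def jac_def tensor_def matrix_vector_mult_def entry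
        sum.distrib sum_distrib_left sum_distrib_right mult_ac)
qed

lemma divg_matrix_vector:
  assumes A: "dir_differentiable_at A z" and F: "dir_differentiable_at F z"
  shows "divg (\<lambda>w. A w *v F w) z
    = F z \<bullet> divM (\<lambda>w. transpose (A w)) z + ddot (A z) (transpose (jac F z))"
proof -
  have "divg (\<lambda>w. A w *v F w) z
      = (\<Sum>i\<in>UNIV. \<Sum>j\<in>UNIV. px i (\<lambda>w. A w $ i $ j) z * F z $ j)
        + (\<Sum>i\<in>UNIV. \<Sum>j\<in>UNIV. A z $ i $ j * px i (\<lambda>w. F w $ j) z)"
    using A F
    by (simp add: divg_def matrix_vector_mult_def px_eq_dir_deriv dir_deriv_sum dir_deriv_mult
        dir_differentiable_intros sum.distrib add.commute)
  also have "(\<Sum>i\<in>UNIV. \<Sum>j\<in>UNIV. px i (\<lambda>w. A w $ i $ j) z * F z $ j)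
      = (\<Sum>j\<in>UNIV. F z $ j * (\<Sum>i\<in>UNIV. px i (\<lambda>w. A w $ i $ j) z))"
    by (subst sum.swap) (simp add: sum_distrib_left mult.commute)
  finally show ?thesis
    by (simp add: divM_def ddot_def jac_def transpose_def inner_vec_def)
qed

lemma ddot_scaleR_left: "ddot (c *\<^sub>R A) B = c * ddot A B"
  by (simp add: ddot_def sum_distrib_left mult.assoc)

lemma transpose_scaleR: "transpose (c *\<^sub>R A) = c *\<^sub>R transpose (A :: real ^ 'n ^ 'm)"
  by (simp add: vec_eq_iff transpose_def)

lemma ddot_transpose_traceless_symmetric:
  fixes J :: "real ^ 'n::finite ^ 'n"
  defines "c \<equiv> 2 / real CARD('n) * trace J"
  defines "\<sigma> \<equiv> \<chi> i j. J $ i $ j + J $ j $ i - c * (if i = j then 1 else 0)"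
  shows "ddot \<sigma> (transpose J) = ddot \<sigma> \<sigma> / 2"
proof -
  have entry: "\<sigma> $ i $ j = J $ i $ j + J $ j $ i - c * (if i = j then 1 else 0)" for i j
    by (simp add: \<sigma>_def)
  have traceless: "(\<Sum>i\<in>UNIV. \<sigma> $ i $ i) = 0"
    by (simp add: entry sum.distrib sum_subtractf sum_distrib_left c_def trace_def)
  have symmetric: "ddot \<sigma> J = ddot \<sigma> (transpose J)"
    unfolding ddot_def transpose_def
    by (subst sum.swap) (simp add: entry add.commute eq_commute)
  have "\<sigma> $ i $ j * \<sigma> $ i $ j
      = \<sigma> $ i $ j * J $ i $ j + \<sigma> $ i $ j * J $ j $ i - (if i = j then c * \<sigma> $ i $ j else 0)" for i j
    by (simp add: entry algebra_simps)
  then have "ddot \<sigma> \<sigma> = ddot \<sigma> J + ddot \<sigma> (transpose J) - c * (\<Sum>i\<in>UNIV. \<sigma> $ i $ i)"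
    by (simp add: ddot_def transpose_def sum.distrib sum_subtractf sum_distrib_left)
  then show ?thesis
    using traceless symmetric by simp
qed

lemma sigmaM_eq_jac:
  fixes u :: "(real ^ 'n::finite) \<times> real \<Rightarrow> real ^ 'n"
  shows "sigmaM u z = (\<chi> i j. jac u z $ i $ j + jac u z $ j $ i
     - 2 / real CARD('n) * trace (jac u z) * (if i = j then 1 else 0))"
  by (simp add: sigmaM_def jac_def divg_eq_trace_jac)

lemma transpose_sigmaM:
  fixes u :: "(real ^ 'n::finite) \<times> real \<Rightarrow> real ^ 'n"
  shows "transpose (sigmaM u z) = sigmaM u z"
  by (simp add: sigmaM_def transpose_def vec_eq_iff add.commute)

lemma ddot_sigmaM_transpose_jac:
  fixes u :: "(real ^ 'n::finite) \<times> real \<Rightarrow> real ^ 'n"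
  shows "ddot (sigmaM u z) (transpose (jac u z)) = ddot (sigmaM u z) (sigmaM u z) / 2"
  unfolding sigmaM_eq_jac by (rule ddot_transpose_traceless_symmetric)

section \<open>Thermodynamic functions\<close>

definition exp_series :: "(nat \<Rightarrow> real) \<Rightarrow> real \<Rightarrow> real" where
  "exp_series c b = (\<Sum>m. c m * exp b ^ m)"

(* b lies strictly inside the domain of convergence, as termwise differentiation at b requires. *)
definition exp_series_inside :: "(nat \<Rightarrow> real) \<Rightarrow> real \<Rightarrow> bool" where
  "exp_series_inside c b \<longleftrightarrow> (\<exists>K > exp b. summable (\<lambda>m. c m * K ^ m))"

lemma exp_series_inside_summable:
  assumes "exp_series_inside c b"
  shows "summable (\<lambda>m. c m * exp b ^ m)"
proof -
  obtain K where K: "exp b < K" "summable (\<lambda>m. c m * K ^ m)"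
    using assms exp_series_inside_def by blast
  show ?thesis
    by (rule powser_inside[OF K(2)]) (use K(1) exp_gt_zero[of b] in simp)
qed

lemma sums_diffs_shift:
  fixes x :: real
  assumes "summable (\<lambda>n. diffs c n * x ^ n)"
  shows "(\<lambda>m. (real m * c m) * x ^ m) sums (x * (\<Sum>n. diffs c n * x ^ n))"
proof -
  have "(\<lambda>n. x * (diffs c n * x ^ n)) sums (x * (\<Sum>n. diffs c n * x ^ n))"
    using sums_mult[OF summable_sums[OF assms]] .
  moreover have "(\<lambda>n. x * (diffs c n * x ^ n)) = (\<lambda>n. (real (Suc n) * c (Suc n)) * x ^ Suc n)"
    by (auto simp: diffs_def)
  ultimately show ?thesis
    using sums_Suc[of "\<lambda>m. (real m * c m) * x ^ m"] by simp
qed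

lemma exp_series_has_derivative:
  assumes "exp_series_inside c b"
  shows "(exp_series c has_real_derivative exp_series (\<lambda>m. real m * c m) b) (at b)"
    and "exp_series_inside (\<lambda>m. real m * c m) b"
proof -
  obtain K where K: "exp b < K" "summable (\<lambda>m. c m * K ^ m)"
    using assms exp_series_inside_def by blast
  have inside: "norm y < K \<Longrightarrow> summable (\<lambda>m. c m * y ^ m)" for y
    using powser_inside[OF K(2)] K(1) exp_gt_zero[of b] by simp
  have nx: "norm (exp b) < K"
    using K(1) by simp
  have "DERIV (\<lambda>x. \<Sum>n. c n * x ^ n) (exp b) :> (\<Sum>n. diffs c n * exp b ^ n)"
    by (rule termdiffs_strong[OF K(2)]) (use nx in simp)
  from DERIV_chain2[OF this DERIV_exp]
  have "DERIV (\<lambda>b. \<Sum>n. c n * exp b ^ n) b :> (\<Sum>n. diffs c n * exp b ^ n) * exp b" .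
  moreover have "(\<Sum>n. diffs c n * exp b ^ n) * exp b = exp_series (\<lambda>m. real m * c m) b"
    using sums_unique[OF sums_diffs_shift[OF termdiff_converges[OF nx inside]]]
    unfolding exp_series_def by (simp add: mult.commute)
  ultimately show "(exp_series c has_real_derivative exp_series (\<lambda>m. real m * c m) b) (at b)"
    unfolding exp_series_def[abs_def] by simp
  define K' where "K' = (exp b + K) / 2"
  have "0 < K"
    using exp_gt_zero[of b] K(1) by (rule less_trans)
  then have "0 < K'"
    by (simp add: K'_def add_pos_pos)
  moreover have "K' < K"
    using K(1) by (simp add: K'_def)
  moreover have K'_gt: "exp b < K'"
    using K(1) by (simp add: K'_def)
  ultimately have "norm K' < K"
    by simp
  show "exp_series_inside (\<lambda>m. real m * c m) b"
    using sums_summable[OF sums_diffs_shift[OF termdiff_converges[OF \<open>norm K' < K\<close> inside]]] K'_gt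
    unfolding exp_series_inside_def by blast
qed

definition mass_coeff :: "(nat \<Rightarrow> real) \<Rightarrow> int \<Rightarrow> nat \<Rightarrow> real" where
  "mass_coeff \<gamma> k m = (if m = 0 then 0 else real m powi k / \<gamma> m)"

lemma mult_mass_coeff: "(\<lambda>m. real m * mass_coeff \<gamma> k m) = mass_coeff \<gamma> (k + 1)"
  by (simp add: fun_eq_iff mass_coeff_def power_int_add_1')

lemma wt_mult_powi: "wt \<gamma> b m * real m powi k = mass_coeff \<gamma> (k + 1) m * exp b ^ m"
  by (simp add: wt_def mass_coeff_def power_int_add_1' exp_of_nat2_mult)

lemma Zsum_eq_exp_series: "Zsum \<gamma> b = exp_series (mass_coeff \<gamma> 1) b"
  using wt_mult_powi[of \<gamma> b _ 0] by (simp add: Zsum_def exp_series_def)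

lemma avg_powi_eq_exp_series:
  "avg \<gamma> b (\<lambda>m. real m powi k) = exp_series (mass_coeff \<gamma> (k + 1)) b / exp_series (mass_coeff \<gamma> 1) b"
  by (simp add: avg_def exp_series_def wt_mult_powi Zsum_eq_exp_series)

lemma avg_mass_eq_exp_series:
  "avg \<gamma> b real = exp_series (mass_coeff \<gamma> 2) b / exp_series (mass_coeff \<gamma> 1) b"
  using avg_powi_eq_exp_series[of \<gamma> b 1] by simp

lemma avg_inverse_mass_eq_powi:
  "avg \<gamma> b (\<lambda>m. 1 / real m) = avg \<gamma> b (\<lambda>m. real m powi (-1))"
  "avg \<gamma> b (\<lambda>m. 1 / real m ^ 2) = avg \<gamma> b (\<lambda>m. real m powi (-2))"
  by (simp_all add: power_int_minus divide_inverse)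

lemma Sset_gamma_pos: "b \<in> Sset \<gamma> \<Longrightarrow> m \<ge> 1 \<Longrightarrow> \<gamma> m > 0"
  by (simp add: Sset_def)

lemma mass_coeff_nonneg:
  assumes "b \<in> Sset \<gamma>"
  shows "mass_coeff \<gamma> k m \<ge> 0"
proof (cases "m = 0")
  case False
  then show ?thesis
    using Sset_gamma_pos[OF assms, of m] by (simp add: mass_coeff_def)
qed (simp add: mass_coeff_def)

lemma interior_Sset_exp_series_inside_le_one:
  assumes b: "b \<in> interior (Sset \<gamma>)" and k: "k \<le> 1"
  shows "exp_series_inside (mass_coeff \<gamma> k) b"
proof -
  obtain e where e: "e > 0" "ball b e \<subseteq> Sset \<gamma>"
    using b mem_interior by blast
  define K where "K = exp (b + e / 2)"
  have "b + e / 2 \<in> Sset \<gamma>"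
    using e by (intro subsetD[OF e(2)]) (simp add: dist_norm)
  moreover have "wt \<gamma> (b + e / 2) = (\<lambda>m. mass_coeff \<gamma> 1 m * K ^ m)"
    using wt_mult_powi[of \<gamma> "b + e / 2" _ 0] by (simp add: fun_eq_iff K_def)
  ultimately have sK: "summable (\<lambda>m. mass_coeff \<gamma> 1 m * K ^ m)"
    by (simp add: Sset_def)
  have "norm (mass_coeff \<gamma> k m * K ^ m) \<le> mass_coeff \<gamma> 1 m * K ^ m" for m
  proof (cases "m = 0")
    case False
    then have "real m powi k \<le> real m powi 1"
      using k by (intro power_int_increasing) auto
    then show ?thesis
      using False Sset_gamma_pos[OF interior_subset[THEN subsetD, OF b], of m]
      by (simp add: mass_coeff_def K_def abs_mult divide_right_mono)
  qed (simp add: mass_coeff_def)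
  then have "summable (\<lambda>m. mass_coeff \<gamma> k m * K ^ m)"
    by (intro summable_comparison_test[OF _ sK]) auto
  moreover have "exp b < K"
    using e by (simp add: K_def)
  ultimately show ?thesis
    unfolding exp_series_inside_def by blast
qed

lemma interior_Sset_exp_series_inside:
  assumes b: "b \<in> interior (Sset \<gamma>)"
  shows "exp_series_inside (mass_coeff \<gamma> k) b"
proof (cases "k \<le> 1")
  case False
  have high: "exp_series_inside (mass_coeff \<gamma> (1 + int j)) b" for j
  proof (induction j)
    case (Suc j)
    then show ?case
      using exp_series_has_derivative(2)[OF Suc] by (simp add: mult_mass_coeff add.assoc)
  qed (use interior_Sset_exp_series_inside_le_one[OF b] in simp)
  then show ?thesis
    using high[of "nat (k - 1)"] False by simp
qed (rule interior_Sset_exp_series_inside_le_one[OF b])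

lemma exp_series_mass_coeff_pos:
  assumes b: "b \<in> interior (Sset \<gamma>)"
  shows "exp_series (mass_coeff \<gamma> k) b > 0"
proof -
  have bS: "b \<in> Sset \<gamma>"
    using b interior_subset by blast
  have "summable (\<lambda>m. mass_coeff \<gamma> k m * exp b ^ m)"
    by (rule exp_series_inside_summable[OF interior_Sset_exp_series_inside[OF b]])
  moreover have "mass_coeff \<gamma> k m * exp b ^ m \<ge> 0" for m
    using mass_coeff_nonneg[OF bS] by simp
  moreover have "mass_coeff \<gamma> k 1 * exp b ^ 1 > 0"
    using Sset_gamma_pos[OF bS, of 1] by (simp add: mass_coeff_def)
  ultimately show ?thesis
    unfolding exp_series_def by (rule suminf_pos2)
qed

lemma Zsum_pos: "b \<in> interior (Sset \<gamma>) \<Longrightarrow> Zsum \<gamma> b > 0"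
  by (simp add: Zsum_eq_exp_series exp_series_mass_coeff_pos)

lemma avg_powi_pos: "b \<in> interior (Sset \<gamma>) \<Longrightarrow> avg \<gamma> b (\<lambda>m. real m powi k) > 0"
  by (simp add: avg_powi_eq_exp_series exp_series_mass_coeff_pos)

lemma avg_powi_zero: "b \<in> interior (Sset \<gamma>) \<Longrightarrow> avg \<gamma> b (\<lambda>m. real m powi 0) = 1"
  using avg_powi_eq_exp_series[of \<gamma> b 0] exp_series_mass_coeff_pos[of b \<gamma> 1] by simp

lemma has_real_derivative_exp_series_mass_coeff:
  "b \<in> interior (Sset \<gamma>) \<Longrightarrow>
    (exp_series (mass_coeff \<gamma> k) has_real_derivative exp_series (mass_coeff \<gamma> (k + 1)) b) (at b)"
  using exp_series_has_derivative(1)[OF interior_Sset_exp_series_inside] by (simp add: mult_mass_coeff)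

lemma avg_powi_has_real_derivative:
  assumes b: "b \<in> interior (Sset \<gamma>)"
  shows "((\<lambda>b. avg \<gamma> b (\<lambda>m. real m powi k)) has_real_derivative
      avg \<gamma> b (\<lambda>m. real m powi (k + 1)) - avg \<gamma> b (\<lambda>m. real m powi k) * avg \<gamma> b real) (at b)"
proof -
  have pos: "exp_series (mass_coeff \<gamma> 1) b > 0"
    by (rule exp_series_mass_coeff_pos[OF b])
  have "((\<lambda>b. exp_series (mass_coeff \<gamma> (k + 1)) b / exp_series (mass_coeff \<gamma> 1) b) has_real_derivative
      (exp_series (mass_coeff \<gamma> (k + 2)) b * exp_series (mass_coeff \<gamma> 1) b
        - exp_series (mass_coeff \<gamma> (k + 1)) b * exp_series (mass_coeff \<gamma> 2) b)
      / (exp_series (mass_coeff \<gamma> 1) b * exp_series (mass_coeff \<gamma> 1) b)) (at b)"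
    using has_real_derivative_exp_series_mass_coeff[OF b, of "k + 1"]
      has_real_derivative_exp_series_mass_coeff[OF b, of 1] pos
    by (auto intro!: derivative_eq_intros simp: add.assoc power2_eq_square)
  then show ?thesis
    using pos
    by (simp add: avg_powi_eq_exp_series avg_mass_eq_exp_series add.assoc field_simps)
qed

lemma ln_Zsum_has_real_derivative:
  assumes b: "b \<in> interior (Sset \<gamma>)"
  shows "((\<lambda>b. ln (Zsum \<gamma> b)) has_real_derivative avg \<gamma> b real) (at b)"
  using has_real_derivative_exp_series_mass_coeff[OF b, of 1] exp_series_mass_coeff_pos[OF b, of 1]
  by (auto intro!: derivative_eq_intros simp: Zsum_eq_exp_series avg_mass_eq_exp_series)

lemma avg_powi_square_le:
  assumes b: "b \<in> interior (Sset \<gamma>)"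
  shows "(avg \<gamma> b (\<lambda>m. real m powi k))\<^sup>2 \<le> avg \<gamma> b (\<lambda>m. real m powi (2 * k))"
proof -
  have bS: "b \<in> Sset \<gamma>"
    using b interior_subset by blast
  define E where "E j = exp_series (mass_coeff \<gamma> j) b" for j
  define a where "a = E (k + 1) / E 1"
  define x where "x j m = mass_coeff \<gamma> j m * exp b ^ m" for j m
  have sx: "x j sums E j" for j
    unfolding x_def E_def exp_series_def
    by (intro summable_sums exp_series_inside_summable interior_Sset_exp_series_inside b)
  have E1: "E 1 > 0"
    unfolding E_def by (rule exp_series_mass_coeff_pos[OF b])
  have "x (2 * k + 1) m - 2 * a * x (k + 1) m + a\<^sup>2 * x 1 m = x 1 m * (real m powi k - a)\<^sup>2" for m
  proof (cases "m = 0")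
    case False
    have "real m powi (2 * k) = (real m powi k)\<^sup>2"
      using power_int_mult[of "real m" k 2] by (simp add: mult.commute)
    then have "real m powi (2 * k + 1) = real m * (real m powi k)\<^sup>2"
      using False by (simp add: power_int_add_1')
    moreover have "real m powi (k + 1) = real m * real m powi k"
      using False by (simp add: power_int_add_1')
    ultimately show ?thesis
      using False Sset_gamma_pos[OF bS, of m]
      by (simp add: x_def mass_coeff_def power2_eq_square field_simps)
  qed (simp add: x_def mass_coeff_def)
  moreover have "x 1 m * (real m powi k - a)\<^sup>2 \<ge> 0" for m
    using mass_coeff_nonneg[OF bS] by (simp add: x_def)
  ultimately have nonneg: "0 \<le> x (2 * k + 1) m - 2 * a * x (k + 1) m + a\<^sup>2 * x 1 m" for m
    by simp
  have "(\<lambda>m. x (2 * k + 1) m - 2 * a * x (k + 1) m + a\<^sup>2 * x 1 m)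
      sums (E (2 * k + 1) - 2 * a * E (k + 1) + a\<^sup>2 * E 1)"
    by (intro sums_add sums_diff sums_mult sx)
  from sums_le[OF nonneg sums_zero this]
  have "0 \<le> E (2 * k + 1) - 2 * a * E (k + 1) + a\<^sup>2 * E 1" .
  also have "\<dots> = E 1 * (E (2 * k + 1) / E 1 - a\<^sup>2)"
    using E1 by (simp add: a_def field_simps power2_eq_square)
  finally show ?thesis
    using E1 by (simp add: avg_powi_eq_exp_series a_def E_def zero_le_mult_iff)
qed

lemma nucoef_nonneg:
  assumes "\<rho> \<ge> 0" "\<Theta> \<ge> 0" "b \<in> interior (Sset \<gamma>)"
  shows "nucoef \<gamma> \<rho> \<Theta> b \<ge> 0"
proof -
  have "(avg \<gamma> b (\<lambda>m. real m powi (-1)))\<^sup>2 \<le> avg \<gamma> b (\<lambda>m. real m powi (-2))"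
    using avg_powi_square_le[OF assms(3), of "-1"] by simp
  then show ?thesis
    using assms(1,2) by (simp add: nucoef_def avg_inverse_mass_eq_powi)
qed

lemma kappacoef_nonneg:
  "\<rho> \<ge> 0 \<Longrightarrow> \<Theta> \<ge> 0 \<Longrightarrow> b \<in> interior (Sset \<gamma>) \<Longrightarrow> kappacoef n \<gamma> \<rho> \<Theta> b \<ge> 0"
  using avg_powi_pos[of b \<gamma> "-2"]
  by (simp add: kappacoef_def avg_inverse_mass_eq_powi less_imp_le)

lemma mucoef_nonneg:
  "\<rho> \<ge> 0 \<Longrightarrow> \<Theta> \<ge> 0 \<Longrightarrow> b \<in> interior (Sset \<gamma>) \<Longrightarrow> mucoef \<gamma> \<rho> \<Theta> b \<ge> 0"
  using avg_powi_pos[of b \<gamma> "-1"]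
  by (simp add: mucoef_def avg_inverse_mass_eq_powi less_imp_le)

lemma ln_Zpart:
  "\<Theta> > 0 \<Longrightarrow> b \<in> interior (Sset \<gamma>) \<Longrightarrow>
    ln (Zpart n \<gamma> b \<Theta>) = real n / 2 * ln (2 * pi * \<Theta>) + ln (Zsum \<gamma> b)"
  using Zsum_pos[of b \<gamma>] by (simp add: Zpart_def ln_mult_pos ln_powr)

section \<open>Smooth positive states\<close>

locale nsme_state =
  fixes \<gamma> :: "nat \<Rightarrow> real" and \<Omega> :: "((real ^ 'n::finite) \<times> real) set"
    and \<rho> \<Theta> \<beta> :: "(real ^ 'n) \<times> real \<Rightarrow> real" and u :: "(real ^ 'n) \<times> real \<Rightarrow> real ^ 'n"
  assumes open_\<Omega>: "open \<Omega>"
    and smooth_\<rho>: "smooth_on \<Omega> \<rho>" and smooth_u: "smooth_on \<Omega> u"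
    and smooth_\<Theta>: "smooth_on \<Omega> \<Theta>" and smooth_\<beta>: "smooth_on \<Omega> \<beta>"
    and \<rho>_pos: "\<And>w. w \<in> \<Omega> \<Longrightarrow> \<rho> w > 0" and \<Theta>_pos: "\<And>w. w \<in> \<Omega> \<Longrightarrow> \<Theta> w > 0"
    and \<beta>_interior: "\<And>w. w \<in> \<Omega> \<Longrightarrow> \<beta> w \<in> interior (Sset \<gamma>)"
begin

abbreviation minv where "minv w \<equiv> avg \<gamma> (\<beta> w) (\<lambda>m. 1 / real m)"
abbreviation mmean where "mmean w \<equiv> avg \<gamma> (\<beta> w) real"
abbreviation N where "N w \<equiv> \<rho> w * minv w"
abbreviation p where "p w \<equiv> \<rho> w * \<Theta> w * minv w"
abbreviation chi where "chi w \<equiv> chifun \<gamma> (\<rho> w) (\<Theta> w) (\<beta> w)"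
abbreviation L where "L w \<equiv> Lfun CARD('n) \<gamma> (\<rho> w) (\<Theta> w) (\<beta> w)"
abbreviation S where "S w \<equiv> Sfun CARD('n) \<gamma> (\<rho> w) (\<Theta> w) (\<beta> w)"
abbreviation \<nu> where "\<nu> w \<equiv> nucoef \<gamma> (\<rho> w) (\<Theta> w) (\<beta> w)"
abbreviation \<kappa> where "\<kappa> w \<equiv> kappacoef CARD('n) \<gamma> (\<rho> w) (\<Theta> w) (\<beta> w)"
abbreviation \<mu> where "\<mu> w \<equiv> mucoef \<gamma> (\<rho> w) (\<Theta> w) (\<beta> w)"

context
  fixes z assumes z: "z \<in> \<Omega>"
begin

lemma dir_differentiable_state:
  "dir_differentiable_at \<rho> z" "dir_differentiable_at \<Theta> z" "dir_differentiable_at \<beta> z"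
  "dir_differentiable_at u z"
  using smooth_\<rho> smooth_\<Theta> smooth_\<beta> smooth_u z by (auto intro: smooth_on_dir_differentiable)

lemma dir_differentiable_state_dir_deriv:
  "dir_differentiable_at (dir_deriv v \<rho>) z" "dir_differentiable_at (dir_deriv v \<Theta>) z"
  "dir_differentiable_at (dir_deriv v \<beta>) z" "dir_differentiable_at (dir_deriv v u) z"
  using smooth_\<rho> smooth_\<Theta> smooth_\<beta> smooth_u z by (auto intro: smooth_on_dir_deriv_dir_differentiable)

lemma has_dir_deriv_state:
  "has_dir_deriv v \<rho> z (dir_deriv v \<rho> z)" "has_dir_deriv v \<Theta> z (dir_deriv v \<Theta> z)"
  "has_dir_deriv v \<beta> z (dir_deriv v \<beta> z)"
  using dir_differentiable_state by (auto intro: has_dir_deriv_dir_deriv)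

lemma has_dir_deriv_avg_powi:
  "has_dir_deriv v (\<lambda>w. avg \<gamma> (\<beta> w) (\<lambda>m. real m powi k)) z
    ((avg \<gamma> (\<beta> z) (\<lambda>m. real m powi (k + 1)) - avg \<gamma> (\<beta> z) (\<lambda>m. real m powi k) * mmean z)
      * dir_deriv v \<beta> z)"
  by (rule has_dir_deriv_chain[OF avg_powi_has_real_derivative[OF \<beta>_interior[OF z]] has_dir_deriv_state(3)])

lemma dir_differentiable_avg_powi: "dir_differentiable_at (\<lambda>w. avg \<gamma> (\<beta> w) (\<lambda>m. real m powi k)) z"
  by (rule dir_differentiable_atI, rule has_dir_deriv_avg_powi)

lemma dir_differentiable_thermo:
  "dir_differentiable_at minv z" "dir_differentiable_at mmean z"
  "dir_differentiable_at \<nu> z" "dir_differentiable_at \<kappa> z" "dir_differentiable_at \<mu> z"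
proof -
  show "dir_differentiable_at minv z"
    using dir_differentiable_avg_powi[of "-1"] by (simp add: avg_inverse_mass_eq_powi)
  show "dir_differentiable_at mmean z"
    using dir_differentiable_avg_powi[of 1] by simp
  note intros = dir_differentiable_intros dir_differentiable_avg_powi dir_differentiable_state
  show "dir_differentiable_at \<nu> z"
    unfolding nucoef_def avg_inverse_mass_eq_powi unfolding power2_eq_square by (intro intros)
  show "dir_differentiable_at \<kappa> z"
    unfolding kappacoef_def avg_inverse_mass_eq_powi by (intro intros)
  show "dir_differentiable_at \<mu> z"
    unfolding mucoef_def avg_inverse_mass_eq_powi by (intro intros)
qed

lemma has_dir_deriv_minv:
  "has_dir_deriv v minv z ((1 - minv z * mmean z) * dir_deriv v \<beta> z)"
  using has_dir_deriv_avg_powi[of v "-1"] avg_powi_zero[OF \<beta>_interior[OF z]]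
  by (simp add: avg_inverse_mass_eq_powi)

lemma has_dir_deriv_N:
  "has_dir_deriv v N z (minv z * dir_deriv v \<rho> z + \<rho> z * (1 - minv z * mmean z) * dir_deriv v \<beta> z)"
  by (rule has_dir_deriv_eq_rhs, rule has_dir_deriv_mult[OF has_dir_deriv_state(1) has_dir_deriv_minv])
    (simp add: algebra_simps)

lemma has_dir_deriv_ln_Zsum:
  "has_dir_deriv v (\<lambda>w. ln (Zsum \<gamma> (\<beta> w))) z (mmean z * dir_deriv v \<beta> z)"
  by (rule has_dir_deriv_chain[OF ln_Zsum_has_real_derivative[OF \<beta>_interior[OF z]] has_dir_deriv_state(3)])

lemma has_dir_deriv_chi:
  "has_dir_deriv v chi z (dir_deriv v \<rho> z / \<rho> z + dir_deriv v \<Theta> z / \<Theta> z - mmean z * dir_deriv v \<beta> z)"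
proof (rule has_dir_deriv_cong[OF open_\<Omega> z])
  show "chi w = ln (\<rho> w) + ln (\<Theta> w) - ln (Zsum \<gamma> (\<beta> w))" if "w \<in> \<Omega>" for w
    using \<rho>_pos[OF that] \<Theta>_pos[OF that] Zsum_pos[OF \<beta>_interior[OF that]]
    by (simp add: chifun_def ln_div ln_mult)
  show "has_dir_deriv v (\<lambda>w. ln (\<rho> w) + ln (\<Theta> w) - ln (Zsum \<gamma> (\<beta> w))) z
      (dir_deriv v \<rho> z / \<rho> z + dir_deriv v \<Theta> z / \<Theta> z - mmean z * dir_deriv v \<beta> z)"
    using \<rho>_pos[OF z] \<Theta>_pos[OF z]
    by (intro has_dir_deriv_intros has_dir_deriv_state has_dir_deriv_ln_Zsum)
qed

lemma has_dir_deriv_L: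
  "has_dir_deriv v L z
    (dir_deriv v \<rho> z / \<rho> z - real CARD('n) / 2 * dir_deriv v \<Theta> z / \<Theta> z - mmean z * dir_deriv v \<beta> z)"
proof (rule has_dir_deriv_cong[OF open_\<Omega> z])
  show "L w = ln (\<rho> w) - real CARD('n) / 2 * ln (2 * pi * \<Theta> w) - ln (Zsum \<gamma> (\<beta> w)) - 1 - real CARD('n) / 2"
    if "w \<in> \<Omega>" for w
    using ln_Zpart[OF \<Theta>_pos[OF that] \<beta>_interior[OF that]] by (simp add: Lfun_def)
  have "has_dir_deriv v (\<lambda>w. ln (\<rho> w) - real CARD('n) / 2 * ln (2 * pi * \<Theta> w) - ln (Zsum \<gamma> (\<beta> w))
      - 1 - real CARD('n) / 2) z
      (dir_deriv v \<rho> z / \<rho> z - (real CARD('n) / 2 * ((2 * pi * dir_deriv v \<Theta> z + 0 * \<Theta> z) / (2 * pi * \<Theta> z))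
        + 0 * ln (2 * pi * \<Theta> z)) - mmean z * dir_deriv v \<beta> z - 0 - 0)"
    using \<rho>_pos[OF z] \<Theta>_pos[OF z]
    by (intro has_dir_deriv_intros has_dir_deriv_state has_dir_deriv_ln_Zsum) simp_all
  then show "has_dir_deriv v (\<lambda>w. ln (\<rho> w) - real CARD('n) / 2 * ln (2 * pi * \<Theta> w) - ln (Zsum \<gamma> (\<beta> w))
      - 1 - real CARD('n) / 2) z
      (dir_deriv v \<rho> z / \<rho> z - real CARD('n) / 2 * dir_deriv v \<Theta> z / \<Theta> z - mmean z * dir_deriv v \<beta> z)"
    by (rule has_dir_deriv_eq_rhs) simp
qed

lemma has_dir_deriv_S:
  "has_dir_deriv v S z ((L z + 1) * dir_deriv v N z + \<beta> z * dir_deriv v \<rho> z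
    - real CARD('n) / 2 * N z / \<Theta> z * dir_deriv v \<Theta> z)"
proof -
  have S_eq: "S = (\<lambda>w. N w * L w + \<rho> w * \<beta> w)"
    by (simp add: fun_eq_iff Sfun_def algebra_simps)
  have deriv: "has_dir_deriv v (\<lambda>w. N w * L w + \<rho> w * \<beta> w) z
      (N z * (dir_deriv v \<rho> z / \<rho> z - real CARD('n) / 2 * dir_deriv v \<Theta> z / \<Theta> z - mmean z * dir_deriv v \<beta> z)
        + (minv z * dir_deriv v \<rho> z + \<rho> z * (1 - minv z * mmean z) * dir_deriv v \<beta> z) * L z
        + (\<rho> z * dir_deriv v \<beta> z + dir_deriv v \<rho> z * \<beta> z))"
    by (intro has_dir_deriv_intros has_dir_deriv_N has_dir_deriv_L has_dir_deriv_state)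
  have DN: "dir_deriv v N z = minv z * dir_deriv v \<rho> z + \<rho> z * (1 - minv z * mmean z) * dir_deriv v \<beta> z"
    by (rule dir_deriv_eqI[OF has_dir_deriv_N])
  show ?thesis
    unfolding S_eq
    by (rule has_dir_deriv_eq_rhs[OF deriv]) (use \<rho>_pos[OF z] in \<open>simp add: DN field_simps\<close>)
qed

end

context
  fixes z assumes z: "z \<in> \<Omega>"
begin

lemma dir_differentiable_N: "dir_differentiable_at N z"
  by (intro dir_differentiable_intros dir_differentiable_state[OF z] dir_differentiable_thermo[OF z])

lemma dir_differentiable_S: "dir_differentiable_at S z"
  by (rule dir_differentiable_atI, rule has_dir_deriv_S[OF z])

lemma dir_differentiable_L: "dir_differentiable_at L z"
  by (rule dir_differentiable_atI, rule has_dir_deriv_L[OF z])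

lemma pt_S:
  "pt S z = (L z + 1) * pt N z + \<beta> z * pt \<rho> z - real CARD('n) / 2 * N z / \<Theta> z * pt \<Theta> z"
  unfolding pt_eq_dir_deriv by (rule dir_deriv_eqI[OF has_dir_deriv_S[OF z]])

lemma grad_S:
  "grad S z = (L z + 1) *\<^sub>R grad N z + \<beta> z *\<^sub>R grad \<rho> z - (real CARD('n) / 2 * N z / \<Theta> z) *\<^sub>R grad \<Theta> z"
  by (simp add: vec_eq_iff grad_eq_dir_deriv dir_deriv_eqI[OF has_dir_deriv_S[OF z]])

lemma grad_L: "grad L z = grad chi z - ((real CARD('n) + 2) / (2 * \<Theta> z)) *\<^sub>R grad \<Theta> z"
  using \<Theta>_pos[OF z]
  by (simp add: vec_eq_iff grad_eq_dir_deriv dir_deriv_eqI[OF has_dir_deriv_L[OF z]]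
      dir_deriv_eqI[OF has_dir_deriv_chi[OF z]] field_simps)

lemma grad_inverse_\<Theta>: "grad (\<lambda>w. 1 / \<Theta> w) z = (- 1 / (\<Theta> z)\<^sup>2) *\<^sub>R grad \<Theta> z"
  using \<Theta>_pos[OF z]
  by (simp add: vec_eq_iff grad_eq_dir_deriv power2_eq_square
      dir_deriv_eqI[OF has_dir_deriv_divide[OF has_dir_deriv_const has_dir_deriv_state(2)[OF z]]])

lemma p_eq_\<Theta>_N: "(\<lambda>w. p w) = (\<lambda>w. \<Theta> w * N w)"
  by (simp add: fun_eq_iff mult_ac)

lemma pt_p: "pt p z = \<Theta> z * pt N z + pt \<Theta> z * N z"
  unfolding p_eq_\<Theta>_N pt_eq_dir_deriv
  by (rule dir_deriv_mult[OF dir_differentiable_state(2)[OF z] dir_differentiable_N])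

lemma grad_p: "grad p z = \<Theta> z *\<^sub>R grad N z + N z *\<^sub>R grad \<Theta> z"
  unfolding p_eq_\<Theta>_N by (rule grad_mult[OF dir_differentiable_state(2)[OF z] dir_differentiable_N])

lemma dir_differentiable_grad_\<Theta>: "dir_differentiable_at (\<lambda>w. grad \<Theta> w) z"
  unfolding grad_eq_dir_deriv
  by (intro dir_differentiable_intros dir_differentiable_state_dir_deriv[OF z])

lemma dir_differentiable_grad_chi: "dir_differentiable_at (\<lambda>w. grad chi w) z"
proof (rule dir_differentiable_at_cong[OF open_\<Omega> z])
  let ?D = "\<lambda>i f. dir_deriv (axis i 1, 0) f"
  show "grad chi w = (\<chi> i. ?D i \<rho> w / \<rho> w + ?D i \<Theta> w / \<Theta> w - mmean w * ?D i \<beta> w)"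
    if "w \<in> \<Omega>" for w
    by (simp add: vec_eq_iff grad_eq_dir_deriv dir_deriv_eqI[OF has_dir_deriv_chi[OF that]])
  show "dir_differentiable_at (\<lambda>w. \<chi> i. ?D i \<rho> w / \<rho> w + ?D i \<Theta> w / \<Theta> w - mmean w * ?D i \<beta> w) z"
    using \<rho>_pos[OF z] \<Theta>_pos[OF z]
    by (intro dir_differentiable_intros dir_differentiable_state[OF z] dir_differentiable_state_dir_deriv[OF z]
        dir_differentiable_thermo[OF z]) auto
qed

lemma dir_differentiable_sigmaM: "dir_differentiable_at (sigmaM u) z"
proof (rule dir_differentiable_at_cong[OF open_\<Omega> z])
  let ?D = "\<lambda>i. dir_deriv (axis i 1, 0) u"
  show "sigmaM u w = (\<chi> i j. ?D j w $ i + ?D i w $ j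
      - 2 / real CARD('n) * (\<Sum>k\<in>UNIV. ?D k w $ k) * (if i = j then 1 else 0))" if "w \<in> \<Omega>" for w
    by (simp add: vec_eq_iff sigmaM_def divg_def px_eq_dir_deriv
        dir_deriv_component[OF dir_differentiable_state(4)[OF that]])
  show "dir_differentiable_at (\<lambda>w. \<chi> i j. ?D j w $ i + ?D i w $ j
      - 2 / real CARD('n) * (\<Sum>k\<in>UNIV. ?D k w $ k) * (if i = j then 1 else 0)) z"
    by (intro dir_differentiable_intros dir_differentiable_state_dir_deriv[OF z])
qed

lemma dir_differentiable_fluxes:
  "dir_differentiable_at (\<lambda>w. \<nu> w *\<^sub>R grad chi w) z"
  "dir_differentiable_at (\<lambda>w. \<kappa> w *\<^sub>R grad \<Theta> w) z"
  "dir_differentiable_at (\<lambda>w. \<mu> w *\<^sub>R sigmaM u w) z"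
  using dir_differentiable_thermo[OF z] dir_differentiable_grad_chi dir_differentiable_grad_\<Theta>
    dir_differentiable_sigmaM
  by (auto intro: dir_differentiable_scaleR)

lemma entropy_production_nonneg:
  "0 \<le> \<nu> z * (norm (grad chi z))\<^sup>2 + \<kappa> z * (norm ((1 / \<Theta> z) *\<^sub>R grad \<Theta> z))\<^sup>2
    + \<mu> z / (2 * \<Theta> z) * ddot (sigmaM u z) (sigmaM u z)"
proof -
  have "0 \<le> \<rho> z" "0 \<le> \<Theta> z"
    using \<rho>_pos[OF z] \<Theta>_pos[OF z] by simp_all
  then have "0 \<le> \<nu> z" "0 \<le> \<kappa> z" "0 \<le> \<mu> z"
    using \<beta>_interior[OF z] by (simp_all add: nucoef_nonneg kappacoef_nonneg mucoef_nonneg)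
  moreover have "0 \<le> ddot (sigmaM u z) (sigmaM u z)"
    by (simp add: ddot_def sum_nonneg)
  ultimately show ?thesis
    using \<Theta>_pos[OF z] by simp
qed

lemma divg_dissipative_energy_flux:
  "divg (\<lambda>w. ((real CARD('n) + 2) * \<nu> w * \<Theta> w) *\<^sub>R grad chi w + (2 * \<kappa> w) *\<^sub>R grad \<Theta> w
      + (2 * \<mu> w) *\<^sub>R (sigmaM u w *v u w)) z
    = (real CARD('n) + 2) * (\<Theta> z * divg (\<lambda>w. \<nu> w *\<^sub>R grad chi w) z + \<nu> z * (grad \<Theta> z \<bullet> grad chi z))
      + 2 * divg (\<lambda>w. \<kappa> w *\<^sub>R grad \<Theta> w) z
      + 2 * (u z \<bullet> divM (\<lambda>w. \<mu> w *\<^sub>R sigmaM u w) z) + \<mu> z * ddot (sigmaM u z) (sigmaM u z)"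
proof -
  note d = dir_differentiable_state[OF z] dir_differentiable_fluxes
  define F1 F2 F3 where "F1 = (\<lambda>w. \<Theta> w *\<^sub>R (\<nu> w *\<^sub>R grad chi w))"
    and "F2 = (\<lambda>w. \<kappa> w *\<^sub>R grad \<Theta> w)" and "F3 = (\<lambda>w. (\<mu> w *\<^sub>R sigmaM u w) *v u w)"
  have dF: "dir_differentiable_at F1 z" "dir_differentiable_at F2 z" "dir_differentiable_at F3 z"
    unfolding F1_def F2_def F3_def matrix_vector_mult_def by (intro dir_differentiable_intros d)+
  have "(\<lambda>w. ((real CARD('n) + 2) * \<nu> w * \<Theta> w) *\<^sub>R grad chi w + (2 * \<kappa> w) *\<^sub>R grad \<Theta> w
      + (2 * \<mu> w) *\<^sub>R (sigmaM u w *v u w))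
    = (\<lambda>w. ((real CARD('n) + 2) *\<^sub>R F1 w + 2 *\<^sub>R F2 w) + 2 *\<^sub>R F3 w)"
    by (simp add: fun_eq_iff F1_def F2_def F3_def scaleR_matrix_vector_assoc mult_ac)
  then have "divg (\<lambda>w. ((real CARD('n) + 2) * \<nu> w * \<Theta> w) *\<^sub>R grad chi w + (2 * \<kappa> w) *\<^sub>R grad \<Theta> w
      + (2 * \<mu> w) *\<^sub>R (sigmaM u w *v u w)) z
    = (real CARD('n) + 2) * divg F1 z + 2 * divg F2 z + 2 * divg F3 z"
    using dF by (simp add: divg_add divg_const_scaleR dir_differentiable_intros)
  moreover have "divg F1 z = \<Theta> z * divg (\<lambda>w. \<nu> w *\<^sub>R grad chi w) z + \<nu> z * (grad \<Theta> z \<bullet> grad chi z)"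
    unfolding F1_def using divg_scaleR[OF d(2) d(5)] by simp
  moreover have "divg F3 z
      = u z \<bullet> divM (\<lambda>w. \<mu> w *\<^sub>R sigmaM u w) z + \<mu> z * (ddot (sigmaM u z) (sigmaM u z) / 2)"
    unfolding F3_def using divg_matrix_vector[OF d(7) d(4)]
    by (simp add: transpose_scaleR transpose_sigmaM ddot_scaleR_left ddot_sigmaM_transpose_jac)
  ultimately show ?thesis
    by (simp add: F2_def algebra_simps)
qed

end

end

section \<open>Balance laws of a solution\<close>

locale nsme_solution = nsme_state \<gamma> \<Omega> \<rho> \<Theta> \<beta> u
  for \<gamma> \<Omega> \<rho> \<Theta> \<beta> and u :: "(real ^ 'n::finite) \<times> real \<Rightarrow> real ^ 'n" +
  fixes \<epsilon> :: real
  assumes solution: "NSME \<epsilon> \<gamma> \<Omega> \<rho> u \<Theta> \<beta>"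
begin

context
  fixes z assumes z: "z \<in> \<Omega>"
begin

lemma mass_balance: "pt \<rho> z + u z \<bullet> grad \<rho> z + \<rho> z * divg u z = 0"
proof -
  have "pt \<rho> z + divg (\<lambda>w. \<rho> w *\<^sub>R u w) z = 0"
    using solution z unfolding NSME_def Let_def by blast
  then show ?thesis
    using divg_scaleR[OF dir_differentiable_state(1,4)[OF z]] by (simp add: inner_commute algebra_simps)
qed

lemma number_balance:
  "pt N z + u z \<bullet> grad N z + N z * divg u z = \<epsilon> * divg (\<lambda>w. \<nu> w *\<^sub>R grad chi w) z"
proof -
  have "pt N z + divg (\<lambda>w. N w *\<^sub>R u w) z = \<epsilon> * divg (\<lambda>w. \<nu> w *\<^sub>R grad chi w) z"
    using solution z unfolding NSME_def Let_def by blast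
  then show ?thesis
    using divg_scaleR[OF dir_differentiable_N[OF z] dir_differentiable_state(4)[OF z]]
    by (simp add: inner_commute algebra_simps)
qed

lemma momentum_balance:
  "\<rho> z *\<^sub>R (pt u z + jac u z *v u z) + grad p z = \<epsilon> *\<^sub>R divM (\<lambda>w. \<mu> w *\<^sub>R sigmaM u w) z"
proof -
  note d = dir_differentiable_state[OF z]
  have eq: "pt (\<lambda>w. \<rho> w *\<^sub>R u w) z + divM (\<lambda>w. \<rho> w *\<^sub>R tensor (u w) (u w)) z + grad p z
      = \<epsilon> *\<^sub>R divM (\<lambda>w. \<mu> w *\<^sub>R sigmaM u w) z"
    and mass: "pt \<rho> z + divg (\<lambda>w. \<rho> w *\<^sub>R u w) z = 0"
    using solution z unfolding NSME_def Let_def by blast+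
  have "pt (\<lambda>w. \<rho> w *\<^sub>R u w) z = \<rho> z *\<^sub>R pt u z + pt \<rho> z *\<^sub>R u z"
    unfolding pt_eq_dir_deriv by (rule dir_deriv_scaleR[OF d(1,4)])
  moreover have "divM (\<lambda>w. \<rho> w *\<^sub>R tensor (u w) (u w)) z
      = divg (\<lambda>w. \<rho> w *\<^sub>R u w) z *\<^sub>R u z + \<rho> z *\<^sub>R (jac u z *v u z)"
    by (rule divM_scaleR_tensor[OF d(1,4)])
  moreover have "pt \<rho> z *\<^sub>R u z + divg (\<lambda>w. \<rho> w *\<^sub>R u w) z *\<^sub>R u z = 0"
    using mass by (simp flip: scaleR_left_distrib)
  ultimately show ?thesis
    using eq by (simp add: algebra_simps)
qed

lemma kinetic_energy_balance:
  "pt (\<lambda>w. \<rho> w * (u w \<bullet> u w)) z + divg (\<lambda>w. (\<rho> w * (u w \<bullet> u w)) *\<^sub>R u w) z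
    = 2 * (\<epsilon> * (u z \<bullet> divM (\<lambda>w. \<mu> w *\<^sub>R sigmaM u w) z) - u z \<bullet> grad p z)"
proof -
  note d = dir_differentiable_state[OF z]
  have d_uu: "dir_differentiable_at (\<lambda>w. u w \<bullet> u w) z"
    by (intro dir_differentiable_intros d)
  have d_\<rho>uu: "dir_differentiable_at (\<lambda>w. \<rho> w * (u w \<bullet> u w)) z"
    by (intro dir_differentiable_intros d)
  have pt_\<rho>uu: "pt (\<lambda>w. \<rho> w * (u w \<bullet> u w)) z = 2 * \<rho> z * (u z \<bullet> pt u z) + pt \<rho> z * (u z \<bullet> u z)"
    unfolding pt_eq_dir_deriv dir_deriv_mult[OF d(1) d_uu] dir_deriv_inner[OF d(4) d(4)]
    by (simp add: inner_commute)
  have divg_\<rho>uu: "divg (\<lambda>w. (\<rho> w * (u w \<bullet> u w)) *\<^sub>R u w) z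
      = \<rho> z * (u z \<bullet> u z) * divg u z + (u z \<bullet> u z) * (u z \<bullet> grad \<rho> z)
        + 2 * \<rho> z * (u z \<bullet> (jac u z *v u z))"
  proof -
    have "u z \<bullet> (u z v* jac u z) = u z \<bullet> (jac u z *v u z)"
      by (metis dot_lmul_matrix inner_commute)
    then show ?thesis
      unfolding divg_scaleR[OF d_\<rho>uu d(4)] grad_mult[OF d(1) d_uu] grad_inner_self[OF d(4)]
      by (simp add: inner_commute inner_add_right)
  qed
  have momentum: "\<rho> z * (u z \<bullet> pt u z + u z \<bullet> (jac u z *v u z))
      = \<epsilon> * (u z \<bullet> divM (\<lambda>w. \<mu> w *\<^sub>R sigmaM u w) z) - u z \<bullet> grad p z"
    using arg_cong[OF momentum_balance, of "\<lambda>v. u z \<bullet> v"] by (simp add: inner_add_right algebra_simps)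
  have "pt (\<lambda>w. \<rho> w * (u w \<bullet> u w)) z + divg (\<lambda>w. (\<rho> w * (u w \<bullet> u w)) *\<^sub>R u w) z
      = (u z \<bullet> u z) * (pt \<rho> z + u z \<bullet> grad \<rho> z + \<rho> z * divg u z)
        + 2 * (\<rho> z * (u z \<bullet> pt u z + u z \<bullet> (jac u z *v u z)))"
    unfolding pt_\<rho>uu divg_\<rho>uu by (simp add: algebra_simps)
  then show ?thesis
    unfolding mass_balance momentum by simp
qed

lemma energy_balance:
  "pt (\<lambda>w. \<rho> w * (u w \<bullet> u w)) z + divg (\<lambda>w. (\<rho> w * (u w \<bullet> u w)) *\<^sub>R u w) z
      + real CARD('n) * pt p z + (real CARD('n) + 2) * (p z * divg u z + grad p z \<bullet> u z)
    = \<epsilon> * divg (\<lambda>w. ((real CARD('n) + 2) * \<nu> w * \<Theta> w) *\<^sub>R grad chi w + (2 * \<kappa> w) *\<^sub>R grad \<Theta> w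
      + (2 * \<mu> w) *\<^sub>R (sigmaM u w *v u w)) z"
proof -
  note d = dir_differentiable_state[OF z] dir_differentiable_thermo[OF z]
  let ?n = "real CARD('n)"
  let ?energy = "\<lambda>w. \<rho> w * (norm (u w))\<^sup>2 + ?n * \<rho> w * \<Theta> w * minv w"
  let ?energy_flux = "\<lambda>w. (\<rho> w * (norm (u w))\<^sup>2) *\<^sub>R u w + ((?n + 2) * \<rho> w * \<Theta> w * minv w) *\<^sub>R u w"
  define E where "E = (\<lambda>w. \<rho> w * (u w \<bullet> u w))"
  have dE: "dir_differentiable_at E z" and dp: "dir_differentiable_at p z"
    unfolding E_def by (intro dir_differentiable_intros d)+
  have dEu: "dir_differentiable_at (\<lambda>w. E w *\<^sub>R u w) z" and dpu: "dir_differentiable_at (\<lambda>w. p w *\<^sub>R u w) z"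
    and dnp: "dir_differentiable_at (\<lambda>w. ?n * p w) z"
    by (intro dir_differentiable_intros dE dp d)+
  have "?energy = (\<lambda>w. E w + ?n * p w)"
    by (simp add: fun_eq_iff E_def power2_norm_eq_inner mult.assoc)
  then have "pt ?energy z = pt E z + ?n * pt p z"
    by (simp only: pt_eq_dir_deriv dir_deriv_add[OF dE dnp] dir_deriv_mult[OF dir_differentiable_const dp]
        dir_deriv_const mult_zero_left add_0_right)
  moreover have "?energy_flux = (\<lambda>w. E w *\<^sub>R u w + (?n + 2) *\<^sub>R (p w *\<^sub>R u w))"
    by (simp add: fun_eq_iff E_def power2_norm_eq_inner mult.assoc)
  then have "divg ?energy_flux z = divg (\<lambda>w. E w *\<^sub>R u w) z + (?n + 2) * (p z * divg u z + grad p z \<bullet> u z)"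
    using dEu dpu
    by (simp only: divg_add divg_const_scaleR[OF dpu] divg_scaleR[OF dp d(4)] dir_differentiable_scaleR
        dir_differentiable_const)
  moreover have "pt ?energy z + divg ?energy_flux z
    = \<epsilon> * divg (\<lambda>w. ((?n + 2) * \<nu> w * \<Theta> w) *\<^sub>R grad chi w + (2 * \<kappa> w) *\<^sub>R grad \<Theta> w
      + (2 * \<mu> w) *\<^sub>R (sigmaM u w *v u w)) z"
    using solution z unfolding NSME_def Let_def by blast
  ultimately show ?thesis
    unfolding E_def by (simp add: algebra_simps)
qed

lemma pressure_balance:
  "real CARD('n) * (pt p z + u z \<bullet> grad p z) + (real CARD('n) + 2) * p z * divg u z
    = \<epsilon> * ((real CARD('n) + 2) * (\<Theta> z * divg (\<lambda>w. \<nu> w *\<^sub>R grad chi w) z + \<nu> z * (grad \<Theta> z \<bullet> grad chi z))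
        + 2 * divg (\<lambda>w. \<kappa> w *\<^sub>R grad \<Theta> w) z + \<mu> z * ddot (sigmaM u z) (sigmaM u z))"
proof -
  let ?n = "real CARD('n)"
  let ?D = "u z \<bullet> divM (\<lambda>w. \<mu> w *\<^sub>R sigmaM u w) z"
  have "?n * (pt p z + u z \<bullet> grad p z) + (?n + 2) * p z * divg u z
      = pt (\<lambda>w. \<rho> w * (u w \<bullet> u w)) z + divg (\<lambda>w. (\<rho> w * (u w \<bullet> u w)) *\<^sub>R u w) z
        + ?n * pt p z + (?n + 2) * (p z * divg u z + grad p z \<bullet> u z) - 2 * (\<epsilon> * ?D)"
    unfolding kinetic_energy_balance by (simp add: algebra_simps inner_commute)
  also have "\<dots> = \<epsilon> * divg (\<lambda>w. ((?n + 2) * \<nu> w * \<Theta> w) *\<^sub>R grad chi w + (2 * \<kappa> w) *\<^sub>R grad \<Theta> w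
      + (2 * \<mu> w) *\<^sub>R (sigmaM u w *v u w)) z - 2 * (\<epsilon> * ?D)"
    unfolding energy_balance ..
  finally show ?thesis
    unfolding divg_dissipative_energy_flux[OF z] by (simp add: algebra_simps)
qed

lemma temperature_balance:
  "real CARD('n) * N z * (pt \<Theta> z + u z \<bullet> grad \<Theta> z) + 2 * p z * divg u z
    = \<epsilon> * (2 * \<Theta> z * divg (\<lambda>w. \<nu> w *\<^sub>R grad chi w) z + (real CARD('n) + 2) * \<nu> z * (grad \<Theta> z \<bullet> grad chi z)
        + 2 * divg (\<lambda>w. \<kappa> w *\<^sub>R grad \<Theta> w) z + \<mu> z * ddot (sigmaM u z) (sigmaM u z))"
proof -
  let ?n = "real CARD('n)"
  let ?X = "divg (\<lambda>w. \<nu> w *\<^sub>R grad chi w) z"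
  have number: "pt N z + u z \<bullet> grad N z = \<epsilon> * ?X - N z * divg u z"
    using number_balance by (simp add: algebra_simps)
  have "pt p z + u z \<bullet> grad p z = \<Theta> z * (pt N z + u z \<bullet> grad N z) + N z * (pt \<Theta> z + u z \<bullet> grad \<Theta> z)"
    unfolding pt_p[OF z] grad_p[OF z] by (simp add: inner_add_right algebra_simps)
  then have pt_p_material: "pt p z + u z \<bullet> grad p z = \<Theta> z * (\<epsilon> * ?X - N z * divg u z) + N z * (pt \<Theta> z + u z \<bullet> grad \<Theta> z)"
    unfolding number .
  have "?n * N z * (pt \<Theta> z + u z \<bullet> grad \<Theta> z) + 2 * p z * divg u z
      = ?n * (\<Theta> z * (\<epsilon> * ?X - N z * divg u z) + N z * (pt \<Theta> z + u z \<bullet> grad \<Theta> z))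
        + (?n + 2) * p z * divg u z - ?n * \<Theta> z * (\<epsilon> * ?X)"
    by (simp add: algebra_simps)
  also have "\<dots> = ?n * (pt p z + u z \<bullet> grad p z) + (?n + 2) * p z * divg u z - ?n * \<Theta> z * (\<epsilon> * ?X)"
    unfolding pt_p_material ..
  also have "\<dots> = \<epsilon> * (2 * \<Theta> z * ?X + (?n + 2) * \<nu> z * (grad \<Theta> z \<bullet> grad chi z)
        + 2 * divg (\<lambda>w. \<kappa> w *\<^sub>R grad \<Theta> w) z + \<mu> z * ddot (sigmaM u z) (sigmaM u z))"
    unfolding pressure_balance by (simp add: algebra_simps)
  finally show ?thesis .
qed

lemma entropy_transport:
  "pt S z + divg (\<lambda>w. S w *\<^sub>R u w) z
    = (L z + 1) * (\<epsilon> * divg (\<lambda>w. \<nu> w *\<^sub>R grad chi w) z) - N z * divg u z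
      - real CARD('n) / 2 * N z / \<Theta> z * (pt \<Theta> z + u z \<bullet> grad \<Theta> z)"
proof -
  let ?X = "divg (\<lambda>w. \<nu> w *\<^sub>R grad chi w) z"
  define D where "D = pt \<Theta> z + u z \<bullet> grad \<Theta> z"
  have number: "pt N z + u z \<bullet> grad N z = \<epsilon> * ?X - N z * divg u z"
    using number_balance by (simp add: algebra_simps)
  have mass: "pt \<rho> z + u z \<bullet> grad \<rho> z = - (\<rho> z * divg u z)"
    using mass_balance by (simp add: algebra_simps)
  have "S z = N z * L z + \<rho> z * \<beta> z"
    by (simp add: Sfun_def algebra_simps)
  moreover have "pt S z + divg (\<lambda>w. S w *\<^sub>R u w) z
      = (L z + 1) * (pt N z + u z \<bullet> grad N z) + \<beta> z * (pt \<rho> z + u z \<bullet> grad \<rho> z)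
        - real CARD('n) / 2 * N z / \<Theta> z * D + S z * divg u z"
    unfolding divg_scaleR[OF dir_differentiable_S[OF z] dir_differentiable_state(4)[OF z]] pt_S[OF z] grad_S[OF z]
      D_def
    by (simp add: inner_add_left inner_diff_left inner_commute algebra_simps add_divide_distrib)
  ultimately show ?thesis
    unfolding number mass D_def[symmetric] by (simp add: algebra_simps)
qed

lemma divg_entropy_flux:
  "divg (phifield \<epsilon> \<gamma> \<rho> u \<Theta> \<beta>) z = divg (\<lambda>w. S w *\<^sub>R u w) z
    + \<epsilon> * (divg (\<lambda>w. \<kappa> w *\<^sub>R grad \<Theta> w) z / \<Theta> z - \<kappa> z * (grad \<Theta> z \<bullet> grad \<Theta> z) / (\<Theta> z)\<^sup>2
      - L z * divg (\<lambda>w. \<nu> w *\<^sub>R grad chi w) z - \<nu> z * (grad L z \<bullet> grad chi z))"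
proof -
  note d = dir_differentiable_state[OF z] dir_differentiable_fluxes[OF z]
  define F\<kappa> F\<nu> where "F\<kappa> = (\<lambda>w. \<kappa> w *\<^sub>R grad \<Theta> w)" and "F\<nu> = (\<lambda>w. \<nu> w *\<^sub>R grad chi w)"
  have dF: "dir_differentiable_at F\<kappa> z" "dir_differentiable_at F\<nu> z"
    using d(5,6) by (simp_all add: F\<kappa>_def F\<nu>_def)
  have dinv: "dir_differentiable_at (\<lambda>w. 1 / \<Theta> w) z"
    using \<Theta>_pos[OF z] by (intro dir_differentiable_intros d) simp
  have dSu: "dir_differentiable_at (\<lambda>w. S w *\<^sub>R u w) z"
    by (intro dir_differentiable_intros dir_differentiable_S[OF z] d)
  have d\<kappa>: "dir_differentiable_at (\<lambda>w. (1 / \<Theta> w) *\<^sub>R F\<kappa> w) z"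
    and d\<nu>: "dir_differentiable_at (\<lambda>w. L w *\<^sub>R F\<nu> w) z"
    by (intro dir_differentiable_intros dinv dF dir_differentiable_L[OF z])+
  have dflux: "dir_differentiable_at (\<lambda>w. \<epsilon> *\<^sub>R ((1 / \<Theta> w) *\<^sub>R F\<kappa> w - L w *\<^sub>R F\<nu> w)) z"
    by (intro dir_differentiable_intros d\<kappa> d\<nu>)
  have "phifield \<epsilon> \<gamma> \<rho> u \<Theta> \<beta> = (\<lambda>w. S w *\<^sub>R u w + \<epsilon> *\<^sub>R ((1 / \<Theta> w) *\<^sub>R F\<kappa> w - L w *\<^sub>R F\<nu> w))"
    by (simp add: fun_eq_iff phifield_def Let_def F\<kappa>_def F\<nu>_def algebra_simps)
  then have "divg (phifield \<epsilon> \<gamma> \<rho> u \<Theta> \<beta>) z = divg (\<lambda>w. S w *\<^sub>R u w) z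
      + \<epsilon> * (divg (\<lambda>w. (1 / \<Theta> w) *\<^sub>R F\<kappa> w) z - divg (\<lambda>w. L w *\<^sub>R F\<nu> w) z)"
    by (simp only: divg_add[OF dSu dflux] divg_const_scaleR divg_diff[OF d\<kappa> d\<nu>]
        dir_differentiable_diff d\<kappa> d\<nu>)
  also have "\<dots> = divg (\<lambda>w. S w *\<^sub>R u w) z
      + \<epsilon> * ((1 / \<Theta> z) * divg F\<kappa> z + grad (\<lambda>w. 1 / \<Theta> w) z \<bullet> F\<kappa> z
        - (L z * divg F\<nu> z + grad L z \<bullet> F\<nu> z))"
    by (simp only: divg_scaleR[OF dinv dF(1)] divg_scaleR[OF dir_differentiable_L[OF z] dF(2)])
  finally show ?thesis
    unfolding grad_inverse_\<Theta>[OF z] by (simp add: F\<kappa>_def F\<nu>_def power2_eq_square)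
qed

lemma entropy_identity:
  "pt S z + divg (phifield \<epsilon> \<gamma> \<rho> u \<Theta> \<beta>) z
    = - \<epsilon> * (\<nu> z * (norm (grad chi z))\<^sup>2 + \<kappa> z * (norm ((1 / \<Theta> z) *\<^sub>R grad \<Theta> z))\<^sup>2
        + \<mu> z / (2 * \<Theta> z) * ddot (sigmaM u z) (sigmaM u z))"
proof -
  let ?n = "real CARD('n)"
  define X K V D G C T \<Sigma> where "X = divg (\<lambda>w. \<nu> w *\<^sub>R grad chi w) z"
    and "K = divg (\<lambda>w. \<kappa> w *\<^sub>R grad \<Theta> w) z" and "V = divg u z"
    and "D = pt \<Theta> z + u z \<bullet> grad \<Theta> z" and "G = grad \<Theta> z \<bullet> grad chi z"
    and "C = grad chi z \<bullet> grad chi z" and "T = grad \<Theta> z \<bullet> grad \<Theta> z"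
    and "\<Sigma> = ddot (sigmaM u z) (sigmaM u z)"
  have transport: "pt S z + divg (\<lambda>w. S w *\<^sub>R u w) z
      = (L z + 1) * (\<epsilon> * X) - N z * V - ?n / 2 * N z / \<Theta> z * D"
    unfolding X_def V_def D_def by (rule entropy_transport)
  have flux: "divg (phifield \<epsilon> \<gamma> \<rho> u \<Theta> \<beta>) z = divg (\<lambda>w. S w *\<^sub>R u w) z
      + \<epsilon> * (K / \<Theta> z - \<kappa> z * T / (\<Theta> z)\<^sup>2 - L z * X - \<nu> z * (grad L z \<bullet> grad chi z))"
    unfolding K_def T_def X_def by (rule divg_entropy_flux)
  have grad_L_chi: "grad L z \<bullet> grad chi z = C - (?n + 2) / (2 * \<Theta> z) * G"
    unfolding grad_L[OF z] C_def G_def by (simp add: inner_diff_left)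
  have "?n * N z * D + 2 * p z * V = \<epsilon> * (2 * \<Theta> z * X + (?n + 2) * \<nu> z * G + 2 * K + \<mu> z * \<Sigma>)"
    unfolding X_def K_def V_def D_def G_def \<Sigma>_def by (rule temperature_balance)
  moreover have "p z = \<Theta> z * N z"
    by (simp add: mult_ac)
  ultimately have temperature: "N z * V + ?n / 2 * N z / \<Theta> z * D
      = \<epsilon> * (2 * \<Theta> z * X + (?n + 2) * \<nu> z * G + 2 * K + \<mu> z * \<Sigma>) / (2 * \<Theta> z)"
    using \<Theta>_pos[OF z] by (simp add: field_simps)
  have norms: "(norm (grad chi z))\<^sup>2 = C" "(norm ((1 / \<Theta> z) *\<^sub>R grad \<Theta> z))\<^sup>2 = T / (\<Theta> z)\<^sup>2"
    unfolding power2_norm_eq_inner C_def T_def by (simp_all add: power2_eq_square)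
  have "pt S z + divg (phifield \<epsilon> \<gamma> \<rho> u \<Theta> \<beta>) z
      = (pt S z + divg (\<lambda>w. S w *\<^sub>R u w) z)
        + \<epsilon> * (K / \<Theta> z - \<kappa> z * T / (\<Theta> z)\<^sup>2 - L z * X - \<nu> z * (grad L z \<bullet> grad chi z))"
    unfolding flux by simp
  also have "\<dots> = (L z + 1) * (\<epsilon> * X) - (N z * V + ?n / 2 * N z / \<Theta> z * D)
      + \<epsilon> * (K / \<Theta> z - \<kappa> z * T / (\<Theta> z)\<^sup>2 - L z * X - \<nu> z * (C - (?n + 2) / (2 * \<Theta> z) * G))"
    unfolding transport grad_L_chi by simp
  also have "\<dots> = - \<epsilon> * (\<nu> z * C + \<kappa> z * (T / (\<Theta> z)\<^sup>2) + \<mu> z / (2 * \<Theta> z) * \<Sigma>)"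
    unfolding temperature using \<Theta>_pos[OF z] by (simp add: field_simps power2_eq_square)
  finally show ?thesis
    unfolding norms \<Sigma>_def .
qed

end

end

theorem proposition4p9:
  fixes \<epsilon> :: real and \<gamma> :: "nat \<Rightarrow> real" and \<Omega> :: "((real ^ 'n::finite) \<times> real) set"
    and \<rho> \<Theta> \<beta> :: "(real ^ 'n) \<times> real \<Rightarrow> real" and u :: "(real ^ 'n) \<times> real \<Rightarrow> real ^ 'n"
  assumes eps: "\<epsilon> > 0"
    and gam: "\<forall>m\<ge>1. \<gamma> m \<ge> 0"
    and Sne: "Sset \<gamma> \<noteq> {}"
    and \<Omega>: "open \<Omega>"
    and sm: "smooth_on \<Omega> \<rho>" "smooth_on \<Omega> u" "smooth_on \<Omega> \<Theta>" "smooth_on \<Omega> \<beta>"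
    and pos: "\<forall>z\<in>\<Omega>. \<rho> z > 0 \<and> \<Theta> z > 0"
    and \<beta>S: "\<forall>z\<in>\<Omega>. \<beta> z \<in> interior (Sset \<gamma>)"
    and sol: "NSME \<epsilon> \<gamma> \<Omega> \<rho> u \<Theta> \<beta>"
  shows "\<forall>z\<in>\<Omega>.
           pt (\<lambda>w. Sfun CARD('n) \<gamma> (\<rho> w) (\<Theta> w) (\<beta> w)) z + divg (phifield \<epsilon> \<gamma> \<rho> u \<Theta> \<beta>) z
             = - \<epsilon> * (nucoef \<gamma> (\<rho> z) (\<Theta> z) (\<beta> z) * (norm (grad (\<lambda>w. chifun \<gamma> (\<rho> w) (\<Theta> w) (\<beta> w)) z))\<^sup>2
                        + kappacoef CARD('n) \<gamma> (\<rho> z) (\<Theta> z) (\<beta> z) * (norm ((1 / \<Theta> z) *\<^sub>R grad \<Theta> z))\<^sup>2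
                        + mucoef \<gamma> (\<rho> z) (\<Theta> z) (\<beta> z) / (2 * \<Theta> z) * ddot (sigmaM u z) (sigmaM u z))
         \<and> - \<epsilon> * (nucoef \<gamma> (\<rho> z) (\<Theta> z) (\<beta> z) * (norm (grad (\<lambda>w. chifun \<gamma> (\<rho> w) (\<Theta> w) (\<beta> w)) z))\<^sup>2
                   + kappacoef CARD('n) \<gamma> (\<rho> z) (\<Theta> z) (\<beta> z) * (norm ((1 / \<Theta> z) *\<^sub>R grad \<Theta> z))\<^sup>2
                   + mucoef \<gamma> (\<rho> z) (\<Theta> z) (\<beta> z) / (2 * \<Theta> z) * ddot (sigmaM u z) (sigmaM u z)) \<le> 0"
proof -
  interpret nsme_solution \<gamma> \<Omega> \<rho> \<Theta> \<beta> u \<epsilon>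
    using \<Omega> sm pos \<beta>S sol by unfold_locales auto
  show ?thesis
    by (intro ballI conjI entropy_identity mult_nonpos_nonneg entropy_production_nonneg)
      (use eps in auto)
qed

end
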